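(* Assume $\Delta$ is a tight SID all of whose rules are of form (I) or (II), and let $\phi$ be a tight sentence over $\Delta$ (with $\Delta$ containing a rule $\mathsf A_\phi()\leftarrow\phi$). For every $\mathcal T\in\mathcal R(\phi)$ and every configuration $(\alpha,m)$ with $(\alpha,m)\models_\Delta\chi(\mathcal T)$, we have $(\alpha,m)\simeq(\alpha_{\mathcal T},m_{\mathcal T})$.
   Context: Signature $\Sigma=(\{\mathsf C_1..\mathsf C_N\},\mathfrak I,\mathfrak P)$ with pairwise disjoint port sets $\mathfrak P(\mathsf C_i)$, port tuples $\mathfrak P(\mathsf I)$ ($\langle\mathfrak P(\mathsf I)\rangle_k$ the $k$-th, $\mathrm{comp}(p)$ the type owning $p$); behavior map with pairwise disjoint state sets $Q_{\mathsf C_i}$. Architectures $\alpha$: $\alpha(\mathsf C)\subseteq\mathbb U$, $\alpha(\mathsf I)\subseteq\mathbb U^{\#(\mathsf I)}$; a configuration is $(\alpha,m)$ with $m$ a set of places $q[u]$ containing, for each $\mathsf C$ and $u\in\alpha(\mathsf C)$, exactly one $q[u]$ with $q\in Q_{\mathsf C}$. CL formulas $\phi::=\mathsf{emp}\mid\mathsf C(x)\mid\mathsf C^q(x)\mid\mathsf I(\vec x)\mid\mathsf A(\vec x)\mid\phi*\phi\mid\exists x.\phi$, SID rules $\mathsf A(\vec x)\leftarrow\phi$ with $\mathrm{fv}(\phi)=\vec x$; $\models^s_\Delta$ is the least relation where $\mathsf C^q(x)$ denotes the single component $\mathsf C[s(x)]$ with marking $\{q[s(x)]\}$, $\mathsf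 I(\vec x)$ the single interaction $\mathsf I[s(\vec x)]$ with empty marking, $\mathsf{emp}$ the empty configuration, predicate atoms unfold by rules, $*$ is union of configurations with disjoint component sets and interaction relations, $\exists$ chooses a value. Rewriting trees $\mathcal R(\phi)$: finite labellings by rules of $\Delta$ of finite prefix-closed complete subsets of $[1,\kappa]^*$ ($\kappa$ bounds predicate-atom occurrences), root labelled $(\mathsf A(\vec x)\leftarrow\phi)$, a node labelled $(\dots\leftarrow\psi_0)$ having exactly children $1..\mathrm{npred}(\psi_0)$, child $i$ labelled by a rule whose head predicate is that of the $i$-th predicate atom of $\psi_0$. $\chi(\mathcal T)$: the root body with each $i$-th predicate atom $\mathsf A_i(\vec y_i)$ replaced by $\chi(\mathcal T|_i)[\vec x_i/\vec y_i]$, $\mathsf A_i(\vec x_i)$ the head of $\mathcal T(i)$, bound variables renamed apart (quantified at the node whose rule introduces them). Rule forms: (I) $\mathsf A(x_1)\leftarrow\mathsf C^q(x_1)$; (II) $\mathsf A(x_1..x_n)\leftarrow\exists y_1..y_k.\ \varphi*\psi*\mathop{\ast}_{i=1}^p\mathsf A_i(\vec z^i)$, $p\ge1$, $\varphi\in\{\mathsf{emp}\}\cup\{\mathsf C^q(x_1)\}$, $\psi$ a separating conjunction of interaction atoms, each variable of $(\{x_1..x_n\}\setminus\mathrm{fv}(\varphi))\cup\{y_1..y_k\}$ occurring exactly once as argument of the predicate atoms and no other arguments. Canonical model ($\mathbb U=[1,\kappa]^*$): $s^\epsilon_{\mathcal T}(x)=\epsilon$ if $x$ occurs in a component atom of the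 root rule, $s^\epsilon_{\mathcal T}(x)=i\cdot s^\epsilon_{\mathcal T|_i}(x_j)$ if $x$ is the $j$-th argument of the $i$-th predicate atom and $x_j$ the $j$-th head parameter of $\mathcal T(i)$; for $\chi(\mathcal T)=\exists\vec z.\eta$, $s_{\mathcal T}(x)=s^\epsilon_{\mathcal T}(x)$ for free $x$, $=w\cdot s^\epsilon_{\mathcal T|_w}(x)$ for $x$ quantified at $w$; $\alpha_{\mathcal T}(\mathsf C)=\{s_{\mathcal T}(x):\mathsf C^q(x)\in\eta\}$, $\alpha_{\mathcal T}(\mathsf I)=\{s_{\mathcal T}(\vec x):\mathsf I(\vec x)\in\eta\}$, $m_{\mathcal T}=\{q[s_{\mathcal T}(x)]:\mathsf C^q(x)\in\eta\}$. Tightness: a profile $\lambda$ maps predicate symbols of nonzero arity to tuples of component types of matching length; $\phi$ is tight for $\lambda$ if each argument $x_j$ of each interaction atom $\mathsf I(\vec x)$ of $\phi$ occurs in a component atom $\mathsf C^q(x_j)$ of $\phi$ with $\langle\mathfrak P(\mathsf I)\rangle_j\in\mathfrak P(\mathsf C)$ or as the $\ell$-th argument of a predicate atom $\mathsf A$ of $\phi$ with $\langle\mathfrak P(\mathsf I)\rangle_j\in\mathfrak P(\langle\lambda(\mathsf A)\rangle_\ell)$; $\Delta$ is tight if for some $\lambda_\Delta$ every rule body is tight for $\lambda_\Delta$ and each head parameter $x_j$ of $\mathsf A$ occurs in a component atom $\mathsf C^q(x_j)$ with $\mathsf C=\langle\lambda_\Delta(\mathsf A)\rangle_j$ or as the $\ell$-th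 argument of a predicate atom $\mathsf B$ with $\langle\lambda_\Delta(\mathsf B)\rangle_\ell=\langle\lambda_\Delta(\mathsf A)\rangle_j$; a formula is tight if tight for $\lambda_\Delta$. Symmetry: for bijections $\vec f=\langle f_1..f_N\rangle$, $f_i:\mathbb U\to\mathbb U$, $(\vec f(\alpha))(\mathsf C_i)=f_i(\alpha(\mathsf C_i))$, $(\vec f(\alpha))(\mathsf I)=\{\langle f_{i_1}(u_1)..f_{i_k}(u_k)\rangle:\langle u_1..u_k\rangle\in\alpha(\mathsf I)\}$ where $\mathsf C_{i_j}=\mathrm{comp}(\langle\mathfrak P(\mathsf I)\rangle_j)$, and $\vec f(m)=\{q[f_i(u)]:q[u]\in m,\ q\in Q_{\mathsf C_i}\}$. $(\alpha_1,m_1)\simeq(\alpha_2,m_2)$ iff some such $\vec f$ has $\vec f(\alpha_1)=\alpha_2$ and $\vec f(m_1)=m_2$. *)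

theory Defs
  imports Main
begin

text \<open>Component types 'c (finitely many), states 'q, interaction types 'i,
  predicate symbols 'a, variables 'v, ports 'p.\<close>

datatype ('c,'q,'i,'a,'v) form =
    Emp
  | Comp 'c 'v
  | CompSt 'c 'q 'v
  | Inter 'i "'v list"
  | Pred 'a "'v list"
  | Sep "('c,'q,'i,'a,'v) form" "('c,'q,'i,'a,'v) form"
  | Ex 'v "('c,'q,'i,'a,'v) form"

text \<open>A rule A(xs) <- body is the triple (A, xs, body).\<close>
type_synonym ('c,'q,'i,'a,'v) rule = "'a \<times> 'v list \<times> ('c,'q,'i,'a,'v) form"

fun fv :: "('c,'q,'i,'a,'v) form \<Rightarrow> 'v set" where
  "fv Emp = {}"
| "fv (Comp C x) = {x}"
| "fv (CompSt C q x) = {x}"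
| "fv (Inter I xs) = set xs"
| "fv (Pred A xs) = set xs"
| "fv (Sep a b) = fv a \<union> fv b"
| "fv (Ex x a) = fv a - {x}"

text \<open>Predicate atoms in left-to-right order (the i-th predicate atom is the (i-1)-th entry).\<close>
fun preds :: "('c,'q,'i,'a,'v) form \<Rightarrow> ('a \<times> 'v list) list" where
  "preds (Pred A xs) = [(A, xs)]"
| "preds (Sep a b) = preds a @ preds b"
| "preds (Ex x a) = preds a"
| "preds _ = []"

abbreviation npred :: "('c,'q,'i,'a,'v) form \<Rightarrow> nat" where
  "npred f \<equiv> length (preds f)"

fun catoms :: "('c,'q,'i,'a,'v) form \<Rightarrow> ('c \<times> 'q \<times> 'v) set" where
  "catoms (CompSt C q x) = {(C, q, x)}"
| "catoms (Sep a b) = catoms a \<union> catoms b"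
| "catoms (Ex x a) = catoms a"
| "catoms _ = {}"

fun iatoms :: "('c,'q,'i,'a,'v) form \<Rightarrow> ('i \<times> 'v list) set" where
  "iatoms (Inter I xs) = {(I, xs)}"
| "iatoms (Sep a b) = iatoms a \<union> iatoms b"
| "iatoms (Ex x a) = iatoms a"
| "iatoms _ = {}"

fun exs :: "'v list \<Rightarrow> ('c,'q,'i,'a,'v) form \<Rightarrow> ('c,'q,'i,'a,'v) form" where
  "exs [] f = f"
| "exs (y # ys) f = Ex y (exs ys f)"

fun bigsep :: "('c,'q,'i,'a,'v) form list \<Rightarrow> ('c,'q,'i,'a,'v) form" where
  "bigsep [] = Emp"
| "bigsep [f] = f"
| "bigsep (f # fs) = Sep f (bigsep fs)"

text \<open>P C: ports of component type C; PI I: the port tuple of interaction type I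
  (its length is the arity #(I)); Q C: states of component type C.\<close>
definition wf_sig :: "('c \<Rightarrow> 'p set) \<Rightarrow> ('i \<Rightarrow> 'p list) \<Rightarrow> ('c \<Rightarrow> 'q set) \<Rightarrow> bool" where
  "wf_sig P PI Q \<longleftrightarrow>
     (\<forall>C C'. C \<noteq> C' \<longrightarrow> P C \<inter> P C' = {}) \<and>
     (\<forall>I p. p \<in> set (PI I) \<longrightarrow> (\<exists>C. p \<in> P C)) \<and>
     (\<forall>C C'. C \<noteq> C' \<longrightarrow> Q C \<inter> Q C' = {})"

definition comp_of :: "('c \<Rightarrow> 'p set) \<Rightarrow> 'p \<Rightarrow> 'c" where
  "comp_of P p = (THE C. p \<in> P C)"

definition wf_sid :: "('i \<Rightarrow> 'p list) \<Rightarrow> ('a \<Rightarrow> nat) \<Rightarrow> nat \<Rightarrow> ('c,'q,'i,'a,'v) rule set \<Rightarrow> bool" where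
  "wf_sid PI ar \<kappa> \<Delta> \<longleftrightarrow> finite \<Delta> \<and>
     (\<forall>(A, xs, f) \<in> \<Delta>. length xs = ar A \<and> distinct xs \<and> fv f = set xs \<and>
        (\<forall>(B, ys) \<in> set (preds f). length ys = ar B) \<and>
        (\<forall>(I, ys) \<in> iatoms f. length ys = length (PI I)) \<and>
        npred f \<le> \<kappa>)"

definition rule_I :: "('c,'q,'i,'a,'v) rule \<Rightarrow> bool" where
  "rule_I r \<longleftrightarrow> (\<exists>A x1 C q. r = (A, [x1], CompSt C q x1))"

definition rule_II :: "('c,'q,'i,'a,'v) rule \<Rightarrow> bool" where
  "rule_II r \<longleftrightarrow> (\<exists>A xs ys \<phi> \<psi>s pas. 
      r = (A, xs, exs ys (Sep (Sep \<phi> (bigsep (map (\<lambda>(I, zs). Inter I zs) \<psi>s)))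
                              (bigsep (map (\<lambda>(B, zs). Pred B zs) pas)))) \<and>
      distinct (xs @ ys) \<and> pas \<noteq> [] \<and>
      (\<phi> = Emp \<or> (\<exists>C q. xs \<noteq> [] \<and> \<phi> = CompSt C q (hd xs))) \<and>
      (let V = (set xs - fv \<phi>) \<union> set ys; args = concat (map snd pas) in
         (\<forall>v \<in> V. count_list args v = 1) \<and> set args \<subseteq> V))"

text \<open>A configuration (alpha, m): alpha is given by the component part (C -> set of u),
  the interaction part (I -> set of tuples) and the marking m, a set of places q[u] = (q,u).\<close>
type_synonym ('c,'i,'q,'u) cfg = "('c \<Rightarrow> 'u set) \<times> ('i \<Rightarrow> 'u list set) \<times> ('q \<times> 'u) set"

definition Univ :: "nat \<Rightarrow> nat list set" where
  "Univ \<kappa> = {w. set w \<subseteq> {1..\<kappa>}}"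

definition is_config :: "('i \<Rightarrow> 'p list) \<Rightarrow> ('c \<Rightarrow> 'q set) \<Rightarrow> 'u set \<Rightarrow> ('c,'i,'q,'u) cfg \<Rightarrow> bool" where
  "is_config PI Q U c \<longleftrightarrow> (case c of (ca, ia, m) \<Rightarrow>
     (\<forall>C. ca C \<subseteq> U) \<and>
     (\<forall>I. \<forall>us \<in> ia I. length us = length (PI I) \<and> set us \<subseteq> U) \<and>
     (\<forall>C. \<forall>u \<in> ca C. \<exists>!q. q \<in> Q C \<and> (q, u) \<in> m))"

definition bind_store :: "'v list \<Rightarrow> 'u list \<Rightarrow> ('v \<Rightarrow> 'u) \<Rightarrow> 'v \<Rightarrow> 'u" where
  "bind_store xs us s v = (case map_of (zip xs us) v of Some u \<Rightarrow> u | None \<Rightarrow> s v)"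

text \<open>The satisfaction relation (alpha,m) |=^s_Delta phi, as least relation (inductive).
  C(x) (without state) is read as a single component in some state of Q C.\<close>
inductive sat :: "('c,'q,'i,'a,'v) rule set \<Rightarrow> ('c \<Rightarrow> 'q set) \<Rightarrow> 'u set \<Rightarrow> ('v \<Rightarrow> 'u)
                   \<Rightarrow> ('c,'q,'i,'a,'v) form \<Rightarrow> ('c,'i,'q,'u) cfg \<Rightarrow> bool"
  for \<Delta> Q U where
  sat_emp: "sat \<Delta> Q U s Emp (\<lambda>_. {}, \<lambda>_. {}, {})"
| sat_comp: "q \<in> Q C \<Longrightarrow> sat \<Delta> Q U s (Comp C x) ((\<lambda>_. {})(C := {s x}), \<lambda>_. {}, {(q, s x)})"
| sat_compst: "q \<in> Q C \<Longrightarrow> sat \<Delta> Q U s (CompSt C q x) ((\<lambda>_. {})(C := {s x}), \<lambda>_. {}, {(q, s x)})"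
| sat_inter: "sat \<Delta> Q U s (Inter I xs) (\<lambda>_. {}, (\<lambda>_. {})(I := {map s xs}), {})"
| sat_pred: "(A, xs, f) \<in> \<Delta> \<Longrightarrow> length xs = length ys \<Longrightarrow>
     sat \<Delta> Q U (bind_store xs (map s ys) s) f c \<Longrightarrow> sat \<Delta> Q U s (Pred A ys) c"
| sat_sep: "sat \<Delta> Q U s f1 (a1, b1, m1) \<Longrightarrow> sat \<Delta> Q U s f2 (a2, b2, m2) \<Longrightarrow>
     (\<forall>C. a1 C \<inter> a2 C = {}) \<Longrightarrow> (\<forall>I. b1 I \<inter> b2 I = {}) \<Longrightarrow>
     sat \<Delta> Q U s (Sep f1 f2) (\<lambda>C. a1 C \<union> a2 C, \<lambda>I. b1 I \<union> b2 I, m1 \<union> m2)"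
| sat_ex: "u \<in> U \<Longrightarrow> sat \<Delta> Q U (s(x := u)) f c \<Longrightarrow> sat \<Delta> Q U s (Ex x f) c"

text \<open>A rewriting tree is a partial labelling of positions (nat lists, children numbered from 1)
  by rules; its domain is dom T.\<close>
type_synonym ('c,'q,'i,'a,'v) rtree = "nat list \<Rightarrow> ('c,'q,'i,'a,'v) rule option"

abbreviation rbody :: "('c,'q,'i,'a,'v) rule \<Rightarrow> ('c,'q,'i,'a,'v) form" where
  "rbody r \<equiv> snd (snd r)"
abbreviation rparams :: "('c,'q,'i,'a,'v) rule \<Rightarrow> 'v list" where
  "rparams r \<equiv> fst (snd r)"

text \<open>T is in R(phi) when its root is labelled by the rule rho = (A_phi() <- phi).\<close>
definition is_rtree :: "('c,'q,'i,'a,'v) rule set \<Rightarrow> nat \<Rightarrow> ('c,'q,'i,'a,'v) rule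
                        \<Rightarrow> ('c,'q,'i,'a,'v) rtree \<Rightarrow> bool" where
  "is_rtree \<Delta> \<kappa> \<rho> T \<longleftrightarrow>
     finite (dom T) \<and> dom T \<subseteq> Univ \<kappa> \<and> T [] = Some \<rho> \<and>
     (\<forall>w v. w @ v \<in> dom T \<longrightarrow> w \<in> dom T) \<and>
     (\<forall>w r. T w = Some r \<longrightarrow> r \<in> \<Delta>) \<and>
     (\<forall>w r. T w = Some r \<longrightarrow>
        (\<forall>i. w @ [i] \<in> dom T \<longleftrightarrow> 1 \<le> i \<and> i \<le> npred (rbody r)) \<and>
        (\<forall>i r'. 1 \<le> i \<longrightarrow> i \<le> npred (rbody r) \<longrightarrow> T (w @ [i]) = Some r' \<longrightarrow>
            fst r' = fst (preds (rbody r) ! (i - 1))))"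

text \<open>Instantiating a rule body at node w: free variables via sigma, bound variables x
  renamed apart to (w, x) (the node introducing them); the i-th predicate atom (counter k)
  is replaced by ch i args, where args are the (renamed) actual arguments.\<close>
fun emb :: "nat list \<Rightarrow> ('v \<Rightarrow> nat list \<times> 'v)
            \<Rightarrow> (nat \<Rightarrow> (nat list \<times> 'v) list \<Rightarrow> ('c,'q,'i,'a,nat list \<times> 'v) form)
            \<Rightarrow> nat \<Rightarrow> ('c,'q,'i,'a,'v) form \<Rightarrow> ('c,'q,'i,'a,nat list \<times> 'v) form" where
  "emb w \<sigma> ch k Emp = Emp"
| "emb w \<sigma> ch k (Comp C x) = Comp C (\<sigma> x)"
| "emb w \<sigma> ch k (CompSt C q x) = CompSt C q (\<sigma> x)"
| "emb w \<sigma> ch k (Inter I xs) = Inter I (map \<sigma> xs)"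
| "emb w \<sigma> ch k (Pred A ys) = ch (Suc k) (map \<sigma> ys)"
| "emb w \<sigma> ch k (Sep a b) = Sep (emb w \<sigma> ch k a) (emb w \<sigma> ch (k + npred a) b)"
| "emb w \<sigma> ch k (Ex x a) = Ex (w, x) (emb w (\<sigma>(x := (w, x))) ch k a)"

text \<open>chi with fuel n: the subtree at w, head parameters instantiated with args.\<close>
fun chi_aux :: "('c,'q,'i,'a,'v) rtree \<Rightarrow> nat \<Rightarrow> nat list \<Rightarrow> (nat list \<times> 'v) list
                \<Rightarrow> ('c,'q,'i,'a,nat list \<times> 'v) form" where
  "chi_aux T 0 w args = Emp"
| "chi_aux T (Suc n) w args =
     (let r = the (T w);
          \<sigma> = (\<lambda>v. case map_of (zip (rparams r) args) v of Some z \<Rightarrow> z | None \<Rightarrow> (w, v))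
      in emb w \<sigma> (\<lambda>i a. chi_aux T n (w @ [i]) a) 0 (rbody r))"

text \<open>chi(T); the fuel card(dom T) exceeds the height of T. Free variables x of the root
  are named ([], x).\<close>
definition chi :: "('c,'q,'i,'a,'v) rtree \<Rightarrow> ('c,'q,'i,'a,nat list \<times> 'v) form" where
  "chi T = chi_aux T (card (dom T)) [] (map (Pair []) (rparams (the (T []))))"

fun seps :: "('c,'q,'i,'a,'v) rtree \<Rightarrow> nat \<Rightarrow> nat list \<Rightarrow> 'v \<Rightarrow> nat list" where
  "seps T 0 w x = []"
| "seps T (Suc n) w x =
     (let f = rbody (the (T w)) in
      if \<exists>C q. (C, q, x) \<in> catoms f then []
      else (let (i, j) = (SOME (i, j). 1 \<le> i \<and> i \<le> npred f \<and>
                              j < length (snd (preds f ! (i - 1))) \<and> snd (preds f ! (i - 1)) ! j = x)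
            in i # seps T n (w @ [i]) (rparams (the (T (w @ [i]))) ! j)))"

text \<open>s_T: a variable (w, x) of chi(T) is x quantified at w (or free, for w = []).\<close>
definition sT :: "('c,'q,'i,'a,'v) rtree \<Rightarrow> nat list \<times> 'v \<Rightarrow> nat list" where
  "sT T v = fst v @ seps T (card (dom T)) (fst v) (snd v)"

definition canon :: "('c,'q,'i,'a,'v) rtree \<Rightarrow> ('c,'i,'q,nat list) cfg" where
  "canon T =
     (\<lambda>C. {sT T x | q x. (C, q, x) \<in> catoms (chi T)},
      \<lambda>I. {map (sT T) xs | xs. (I, xs) \<in> iatoms (chi T)},
      {(q, sT T x) | C q x. (C, q, x) \<in> catoms (chi T)})"

text \<open>chi(T) has variables of type nat list * 'v; it is interpreted w.r.t. Delta with
  variables renamed by x |-> ([], x) (chi(T) contains no predicate atoms anyway).\<close>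
fun rn_form :: "('v \<Rightarrow> 'w) \<Rightarrow> ('c,'q,'i,'a,'v) form \<Rightarrow> ('c,'q,'i,'a,'w) form" where
  "rn_form g Emp = Emp"
| "rn_form g (Comp C x) = Comp C (g x)"
| "rn_form g (CompSt C q x) = CompSt C q (g x)"
| "rn_form g (Inter I xs) = Inter I (map g xs)"
| "rn_form g (Pred A xs) = Pred A (map g xs)"
| "rn_form g (Sep a b) = Sep (rn_form g a) (rn_form g b)"
| "rn_form g (Ex x a) = Ex (g x) (rn_form g a)"

definition lift_sid :: "('c,'q,'i,'a,'v) rule set \<Rightarrow> ('c,'q,'i,'a,nat list \<times> 'v) rule set" where
  "lift_sid \<Delta> = (\<lambda>(A, xs, f). (A, map (Pair []) xs, rn_form (Pair []) f)) ` \<Delta>"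

definition tight_form :: "('c \<Rightarrow> 'p set) \<Rightarrow> ('i \<Rightarrow> 'p list) \<Rightarrow> ('a \<Rightarrow> 'c list)
                          \<Rightarrow> ('c,'q,'i,'a,'v) form \<Rightarrow> bool" where
  "tight_form P PI prof f \<longleftrightarrow>
     (\<forall>(I, xs) \<in> iatoms f. \<forall>j < length xs.
        (\<exists>C q. (C, q, xs ! j) \<in> catoms f \<and> PI I ! j \<in> P C) \<or>
        (\<exists>A ys l. (A, ys) \<in> set (preds f) \<and> l < length ys \<and> ys ! l = xs ! j \<and>
                  PI I ! j \<in> P (prof A ! l)))"

definition tight_sid_for :: "('c \<Rightarrow> 'p set) \<Rightarrow> ('i \<Rightarrow> 'p list) \<Rightarrow> ('a \<Rightarrow> nat) \<Rightarrow> ('a \<Rightarrow> 'c list)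
                            \<Rightarrow> ('c,'q,'i,'a,'v) rule set \<Rightarrow> bool" where
  "tight_sid_for P PI ar prof \<Delta> \<longleftrightarrow> (\<forall>A. length (prof A) = ar A) \<and>
     (\<forall>(A, xs, f) \<in> \<Delta>. tight_form P PI prof f \<and>
        (\<forall>j < length xs.
           (\<exists>q. (prof A ! j, q, xs ! j) \<in> catoms f) \<or>
           (\<exists>B ys l. (B, ys) \<in> set (preds f) \<and> l < length ys \<and> ys ! l = xs ! j \<and>
                     prof B ! l = prof A ! j)))"

definition state_owner :: "('c \<Rightarrow> 'q set) \<Rightarrow> 'q \<Rightarrow> 'c" where
  "state_owner Q q = (THE C. q \<in> Q C)"

definition cfg_map :: "('c \<Rightarrow> 'p set) \<Rightarrow> ('i \<Rightarrow> 'p list) \<Rightarrow> ('c \<Rightarrow> 'q set)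
                       \<Rightarrow> ('c \<Rightarrow> 'u \<Rightarrow> 'u) \<Rightarrow> ('c,'i,'q,'u) cfg \<Rightarrow> ('c,'i,'q,'u) cfg" where
  "cfg_map P PI Q f c = (case c of (ca, ia, m) \<Rightarrow>
     (\<lambda>C. f C ` ca C,
      \<lambda>I. (\<lambda>us. map (\<lambda>(p, u). f (comp_of P p) u) (zip (PI I) us)) ` ia I,
      {(q, f C u) | q u C. (q, u) \<in> m \<and> q \<in> Q C}))"

definition sym_cfg :: "('c \<Rightarrow> 'p set) \<Rightarrow> ('i \<Rightarrow> 'p list) \<Rightarrow> ('c \<Rightarrow> 'q set) \<Rightarrow> 'u set
                       \<Rightarrow> ('c,'i,'q,'u) cfg \<Rightarrow> ('c,'i,'q,'u) cfg \<Rightarrow> bool" where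
  "sym_cfg P PI Q U c1 c2 \<longleftrightarrow>
     (\<exists>f. (\<forall>C. bij_betw (f C) U U) \<and> cfg_map P PI Q f c1 = c2)"

end

theory Submission
  imports Defs "HOL-Combinatorics.Transposition"
begin

text \<open>
  Unfolding all predicate atoms, \<open>\<chi>(T)\<close> becomes a formula without predicate atoms whose existential
  variables are renamed apart. Hence every model \<open>(\<alpha>, m)\<close> of \<open>\<chi>(T)\<close> is the configuration described
  by the atoms of \<open>\<chi>(T)\<close> under a single store \<open>s\<close>, and \<open>s\<close> is injective on the variables of the
  component atoms of each type, since separated conjuncts have disjoint component sets. The canonical
  configuration is described by the same atoms under the canonical store \<open>s\<^sub>T\<close>, which is injective
  as well: every node of \<open>T\<close> contributes at most one component atom, and \<open>s\<^sub>T\<close> places it at that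
  node. So for each component type \<open>C\<close> the map \<open>s\<^sub>T \<circ> s\<inverse>\<close> is a finite partial injection of the
  universe, which extends to a bijection \<open>f\<^sub>C\<close>. Tightness makes every argument of an interaction atom
  the variable of a component atom of the type owning the corresponding port, so the \<open>f\<^sub>C\<close> also map
  the interactions and the marking of \<open>(\<alpha>, m)\<close> onto those of the canonical configuration.
\<close>

section \<open>Models of formulas without predicate atoms\<close>

fun bvars :: "('c,'q,'i,'a,'v) form \<Rightarrow> 'v set" where
  "bvars (Sep a b) = bvars a \<union> bvars b"
| "bvars (Ex x a) = insert x (bvars a)"
| "bvars _ = {}"

fun vars :: "('c,'q,'i,'a,'v) form \<Rightarrow> 'v set" where
  "vars Emp = {}"
| "vars (Comp C x) = {x}"
| "vars (CompSt C q x) = {x}"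
| "vars (Inter I xs) = set xs"
| "vars (Pred A xs) = set xs"
| "vars (Sep a b) = vars a \<union> vars b"
| "vars (Ex x a) = insert x (vars a)"

fun binders_apart :: "('c,'q,'i,'a,'v) form \<Rightarrow> bool" where
  "binders_apart (Sep a b) \<longleftrightarrow>
     binders_apart a \<and> binders_apart b \<and> bvars a \<inter> vars b = {} \<and> bvars b \<inter> vars a = {}"
| "binders_apart (Ex x a) \<longleftrightarrow> binders_apart a"
| "binders_apart _ \<longleftrightarrow> True"

fun stateful :: "('c,'q,'i,'a,'v) form \<Rightarrow> bool" where
  "stateful (Comp C x) \<longleftrightarrow> False"
| "stateful (Sep a b) \<longleftrightarrow> stateful a \<and> stateful b"
| "stateful (Ex x a) \<longleftrightarrow> stateful a"
| "stateful _ \<longleftrightarrow> True"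

fun quantifier_free :: "('c,'q,'i,'a,'v) form \<Rightarrow> bool" where
  "quantifier_free (Ex x a) \<longleftrightarrow> False"
| "quantifier_free (Sep a b) \<longleftrightarrow> quantifier_free a \<and> quantifier_free b"
| "quantifier_free _ \<longleftrightarrow> True"

definition comp_vars :: "('c,'q,'i,'a,'v) form \<Rightarrow> 'c \<Rightarrow> 'v set" where
  "comp_vars F C = {x. \<exists>q. (C, q, x) \<in> catoms F}"

definition atoms_cfg :: "('v \<Rightarrow> 'u) \<Rightarrow> ('c,'q,'i,'a,'v) form \<Rightarrow> ('c,'i,'q,'u) cfg" where
  "atoms_cfg s F =
     (\<lambda>C. s ` comp_vars F C, \<lambda>I. map s ` {xs. (I, xs) \<in> iatoms F},
      {(q, s x) | C q x. (C, q, x) \<in> catoms F})"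

lemma catoms_vars: "(C, q, x) \<in> catoms F \<Longrightarrow> x \<in> vars F"
  by (induction F) auto

lemma iatoms_vars: "(I, xs) \<in> iatoms F \<Longrightarrow> set xs \<subseteq> vars F"
  by (induction F) auto

lemma finite_catoms: "finite (catoms F)"
  by (induction F) auto

lemma finite_comp_vars: "finite (comp_vars F C)"
proof -
  have "comp_vars F C \<subseteq> (\<lambda>(C, q, x). x) ` catoms F"
    by (force simp: comp_vars_def)
  then show ?thesis
    using finite_catoms finite_subset by blast
qed

lemma comp_vars_simps [simp]:
  "comp_vars (Sep a b) C = comp_vars a C \<union> comp_vars b C"
  "comp_vars (Ex x a) C = comp_vars a C"
  by (auto simp: comp_vars_def)

lemma atoms_cfg_cong:
  assumes "\<And>x. x \<in> vars F \<Longrightarrow> s x = t x"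
  shows "atoms_cfg s F = atoms_cfg t F"
proof -
  have "s ` comp_vars F C = t ` comp_vars F C" for C
    using assms by (intro image_cong) (auto simp: comp_vars_def dest: catoms_vars)
  moreover have "map s ` {xs. (I, xs) \<in> iatoms F} = map t ` {xs. (I, xs) \<in> iatoms F}" for I
    using assms by (intro image_cong) (auto intro!: map_cong dest!: iatoms_vars)
  moreover have "{(q, s x) | C q x. (C, q, x) \<in> catoms F} = {(q, t x) | C q x. (C, q, x) \<in> catoms F}"
    using assms catoms_vars by metis
  ultimately show ?thesis
    by (simp add: atoms_cfg_def)
qed

lemma atoms_cfg_Sep:
  "atoms_cfg s (Sep a b) =
     (case (atoms_cfg s a, atoms_cfg s b) of ((a1, b1, m1), (a2, b2, m2)) \<Rightarrow>
        (\<lambda>C. a1 C \<union> a2 C, \<lambda>I. b1 I \<union> b2 I, m1 \<union> m2))"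
  by (auto simp: atoms_cfg_def fun_eq_iff image_Un Collect_disj_eq)

lemma sat_imp_atoms_cfg:
  assumes "sat \<Delta> Q U s F c" "preds F = []" "stateful F" "binders_apart F" "\<forall>x. s x \<in> U"
  shows "\<exists>s'. (\<forall>x. x \<notin> bvars F \<longrightarrow> s' x = s x) \<and> (\<forall>x. s' x \<in> U) \<and> c = atoms_cfg s' F \<and>
     (\<forall>C. inj_on s' (comp_vars F C)) \<and> (\<forall>(C, q, x) \<in> catoms F. q \<in> Q C)"
  using assms
proof (induction rule: sat.induct)
  case (sat_sep s f1 a1 b1 m1 f2 a2 b2 m2)
  then obtain s1 s2 where
      s1: "\<forall>x. x \<notin> bvars f1 \<longrightarrow> s1 x = s x" "\<forall>x. s1 x \<in> U" "(a1, b1, m1) = atoms_cfg s1 f1"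
        "\<forall>C. inj_on s1 (comp_vars f1 C)" "\<forall>(C, q, x) \<in> catoms f1. q \<in> Q C"
    and s2: "\<forall>x. x \<notin> bvars f2 \<longrightarrow> s2 x = s x" "\<forall>x. s2 x \<in> U" "(a2, b2, m2) = atoms_cfg s2 f2"
        "\<forall>C. inj_on s2 (comp_vars f2 C)" "\<forall>(C, q, x) \<in> catoms f2. q \<in> Q C"
    by auto
  \<comment> \<open>binders kept apart let the witnesses chosen for the two conjuncts be merged into one store\<close>
  define s' where "s' x = (if x \<in> bvars f1 then s1 x else s2 x)" for x
  have on_f1: "s' x = s1 x" if "x \<in> vars f1" for x
    using that sat_sep.prems(3) s1(1) s2(1) by (auto simp: s'_def)
  have on_f2: "s' x = s2 x" if "x \<in> vars f2" for x
    using that sat_sep.prems(3) by (auto simp: s'_def)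
  have cfg1: "atoms_cfg s' f1 = (a1, b1, m1)"
    using atoms_cfg_cong[of f1 s' s1] on_f1 s1(3) by simp
  have cfg2: "atoms_cfg s' f2 = (a2, b2, m2)"
    using atoms_cfg_cong[of f2 s' s2] on_f2 s2(3) by simp
  have "inj_on s' (comp_vars (Sep f1 f2) C)" for C
  proof -
    have cv: "comp_vars f1 C \<subseteq> vars f1" "comp_vars f2 C \<subseteq> vars f2"
      by (auto simp: comp_vars_def catoms_vars)
    have "inj_on s' (comp_vars f1 C)" "inj_on s' (comp_vars f2 C)"
      using s1(4) s2(4) inj_on_cong[of _ s' s1] inj_on_cong[of _ s' s2] on_f1 on_f2 cv
      by (metis subsetD)+
    moreover have "s' ` comp_vars f1 C \<inter> s' ` comp_vars f2 C = {}"
      using cfg1 cfg2 sat_sep.hyps(3) by (auto simp: atoms_cfg_def)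
    ultimately show ?thesis
      by (auto simp: inj_on_Un)
  qed
  moreover have "\<forall>x. x \<notin> bvars (Sep f1 f2) \<longrightarrow> s' x = s x" "\<forall>x. s' x \<in> U"
    using s1(1,2) s2(1,2) by (auto simp: s'_def)
  moreover have "\<forall>(C, q, x) \<in> catoms (Sep f1 f2). q \<in> Q C"
    using s1(5) s2(5) by auto
  ultimately show ?case
    using cfg1 cfg2 by (intro exI[of _ s']) (simp add: atoms_cfg_Sep)
next
  case (sat_ex u s x f c)
  then have "\<forall>y. (s(x := u)) y \<in> U" by auto
  with sat_ex obtain s' where "\<forall>y. y \<notin> bvars f \<longrightarrow> s' y = (s(x := u)) y" "\<forall>x. s' x \<in> U"
      "c = atoms_cfg s' f" "\<forall>C. inj_on s' (comp_vars f C)" "\<forall>(C, q, x) \<in> catoms f. q \<in> Q C"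
    by auto
  then show ?case
    by (intro exI[of _ s']) (auto simp: atoms_cfg_def)
qed (auto simp: atoms_cfg_def comp_vars_def fun_eq_iff inj_on_def)

lemma inj_on_UN_separated:
  assumes "\<forall>i \<in> I. inj_on f (A i)" "\<forall>i \<in> I. \<forall>j \<in> I. i \<noteq> j \<longrightarrow> f ` A i \<inter> f ` A j = {}"
  shows "inj_on f (\<Union>i \<in> I. A i)"
  using assms unfolding inj_on_def by (metis UN_E disjoint_iff image_eqI)

lemma bij_betw_extension:
  assumes "finite A" "A \<subseteq> U" "inj_on g A" "g ` A \<subseteq> U"
  obtains f where "bij_betw f U U" "\<forall>a\<in>A. f a = g a"
  using assms
proof (induction A arbitrary: thesis rule: finite_induct)
  case empty
  then show ?case
    using bij_betw_id by blast
next
  case (insert a A)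
  then obtain f where f: "bij_betw f U U" "\<forall>b\<in>A. f b = g b"
    by auto
  have "f a \<in> U" "g a \<in> U"
    using insert.prems bij_betwE[OF f(1)] by auto
  then have bij: "bij_betw (transpose (f a) (g a) \<circ> f) U U"
    using f(1) by (intro bij_betw_trans) auto
  have "(transpose (f a) (g a) \<circ> f) b = g b" if "b \<in> insert a A" for b
  proof (cases "b = a")
    case False
    with that have "b \<in> A" by simp
    have "g b \<noteq> g a"
      using insert.prems(3) \<open>b \<in> A\<close> False by (meson inj_onD insertI1 insertI2)
    moreover have "f b \<noteq> f a"
      using insert.prems(2) \<open>b \<in> A\<close> False inj_onD[OF bij_betw_imp_inj_on[OF f(1)]] by blast
    ultimately show ?thesis
      using f(2) \<open>b \<in> A\<close> by (simp add: transpose_def)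
  qed simp
  with bij show ?case
    using insert.prems(1) by blast
qed

lemma bij_betw_extension_inj_pair:
  assumes "finite X" "inj_on s1 X" "inj_on s2 X" "s1 ` X \<subseteq> U" "s2 ` X \<subseteq> U"
  obtains f where "bij_betw f U U" "\<forall>x \<in> X. f (s1 x) = s2 x"
proof -
  have "inj_on (s2 \<circ> the_inv_into X s1) (s1 ` X)" "(s2 \<circ> the_inv_into X s1) ` s1 ` X \<subseteq> U"
    using assms(2,3,5) by (auto simp: inj_on_def the_inv_into_f_f)
  with assms(1,4) obtain f where "bij_betw f U U" "\<forall>a \<in> s1 ` X. f a = (s2 \<circ> the_inv_into X s1) a"
    by (metis bij_betw_extension finite_imageI)
  with assms(2) show ?thesis
    using that by (auto simp: the_inv_into_f_f)
qed

lemma sym_cfg_atoms_cfg: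
  assumes "wf_sig P PI Q"
    and states: "\<forall>(C, q, x) \<in> catoms F. q \<in> Q C"
    and ports: "\<forall>(I, xs) \<in> iatoms F. length xs = length (PI I) \<and>
        (\<forall>j < length xs. xs ! j \<in> comp_vars F (comp_of P (PI I ! j)))"
    and "\<forall>C. inj_on s1 (comp_vars F C)" "\<forall>C. s1 ` comp_vars F C \<subseteq> U"
    and "\<forall>C. inj_on s2 (comp_vars F C)" "\<forall>C. s2 ` comp_vars F C \<subseteq> U"
  shows "sym_cfg P PI Q U (atoms_cfg s1 F) (atoms_cfg s2 F)"
proof -
  have "\<exists>f. bij_betw f U U \<and> (\<forall>x \<in> comp_vars F C. f (s1 x) = s2 x)" for C
    using bij_betw_extension_inj_pair[OF finite_comp_vars] assms(4-7) by metis
  then obtain f where bij: "\<forall>C. bij_betw (f C) U U"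
    and f: "\<And>C x. x \<in> comp_vars F C \<Longrightarrow> f C (s1 x) = s2 x"
    by metis
  have owner: "C' = C" if "q \<in> Q C" "(C', q, x) \<in> catoms F" for C C' q x
    using assms(1) states that by (fastforce simp: wf_sig_def)
  have tuple: "map (\<lambda>(p, u). f (comp_of P p) u) (zip (PI I) (map s1 xs)) = map s2 xs"
    if "(I, xs) \<in> iatoms F" for I xs
    using ports that f by (auto intro!: nth_equalityI)
  have comps: "f C ` s1 ` comp_vars F C = s2 ` comp_vars F C" for C
    using f by (force simp: image_image)
  have inters: "(\<lambda>us. map (\<lambda>(p, u). f (comp_of P p) u) (zip (PI I) us)) ` map s1 ` {xs. (I, xs) \<in> iatoms F}
      = map s2 ` {xs. (I, xs) \<in> iatoms F}" for I
    using tuple by (force simp: image_image)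
  have marking: "{(q, f C u) | q u C. (q, u) \<in> {(q, s1 x) | C q x. (C, q, x) \<in> catoms F} \<and> q \<in> Q C}
      = {(q, s2 x) | C q x. (C, q, x) \<in> catoms F}"
  proof (intro set_eqI iffI)
    fix z assume "z \<in> {(q, f C u) | q u C. (q, u) \<in> {(q, s1 x) | C q x. (C, q, x) \<in> catoms F} \<and> q \<in> Q C}"
    then obtain q C C' x where "z = (q, f C (s1 x))" "(C', q, x) \<in> catoms F" "q \<in> Q C"
      by blast
    then show "z \<in> {(q, s2 x) | C q x. (C, q, x) \<in> catoms F}"
      using owner f by (fastforce simp: comp_vars_def)
  next
    fix z assume "z \<in> {(q, s2 x) | C q x. (C, q, x) \<in> catoms F}"
    then obtain C q x where z: "z = (q, s2 x)" and atom: "(C, q, x) \<in> catoms F"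
      by blast
    moreover have "q \<in> Q C"
      using states atom by blast
    moreover have "s2 x = f C (s1 x)"
      using f[of x C] atom unfolding comp_vars_def by (metis (mono_tags, lifting) mem_Collect_eq)
    ultimately show "z \<in> {(q, f C u) | q u C. (q, u) \<in> {(q, s1 x) | C q x. (C, q, x) \<in> catoms F} \<and> q \<in> Q C}"
      by blast
  qed
  have "cfg_map P PI Q f (atoms_cfg s1 F) = atoms_cfg s2 F"
    unfolding cfg_map_def atoms_cfg_def using comps inters marking by simp
  with bij show ?thesis
    unfolding sym_cfg_def by blast
qed

section \<open>Instantiated rule bodies\<close>

lemma exs_simps [simp]:
  "catoms (exs ys g) = catoms g" "iatoms (exs ys g) = iatoms g" "preds (exs ys g) = preds g"
  "bvars (exs ys g) = set ys \<union> bvars g" "vars (exs ys g) = set ys \<union> vars g"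
  "binders_apart (exs ys g) = binders_apart g" "stateful (exs ys g) = stateful g"
  by (induction ys) auto

lemma comp_vars_exs [simp]: "comp_vars (exs ys g) C = comp_vars g C"
  by (simp add: comp_vars_def)

lemma bigsep_simps [simp]:
  "catoms (bigsep fs) = (\<Union>f\<in>set fs. catoms f)" "iatoms (bigsep fs) = (\<Union>f\<in>set fs. iatoms f)"
  "preds (bigsep fs) = concat (map preds fs)" "quantifier_free (bigsep fs) = (\<forall>f\<in>set fs. quantifier_free f)"
  "stateful (bigsep fs) = (\<forall>f\<in>set fs. stateful f)"
  by (induction fs rule: bigsep.induct) auto

lemma emb_exs:
  "emb w \<sigma> ch k (exs ys g) = exs (map (Pair w) ys) (emb w (\<lambda>v. if v \<in> set ys then (w, v) else \<sigma> v) ch k g)"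
proof (induction ys arbitrary: \<sigma>)
  case (Cons y ys)
  have "(\<lambda>v. if v \<in> set ys then (w, v) else (\<sigma>(y := (w, y))) v) = (\<lambda>v. if v \<in> set (y # ys) then (w, v) else \<sigma> v)"
    by auto
  with Cons show ?case
    by simp
qed simp

definition emb_children ::
    "('v \<Rightarrow> 'w) \<Rightarrow> (nat \<Rightarrow> 'w list \<Rightarrow> ('c,'q,'i,'a,'w) form) \<Rightarrow> nat \<Rightarrow> ('c,'q,'i,'a,'v) form
     \<Rightarrow> ('c,'q,'i,'a,'w) form list" where
  "emb_children \<sigma> ch k g = map (\<lambda>(p, B, zs). ch p (map \<sigma> zs)) (enumerate (Suc k) (preds g))"

lemma emb_children_Sep:
  "emb_children \<sigma> ch k (Sep a b) = emb_children \<sigma> ch k a @ emb_children \<sigma> ch (k + npred a) b"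
  by (simp add: emb_children_def enumerate_append_eq)

lemma length_emb_children [simp]: "length (emb_children \<sigma> ch k g) = npred g"
  by (simp add: emb_children_def)

lemma nth_emb_children:
  "i < npred g \<Longrightarrow> emb_children \<sigma> ch k g ! i = ch (Suc (k + i)) (map \<sigma> (snd (preds g ! i)))"
  by (simp add: emb_children_def nth_enumerate_eq split: prod.splits)

lemma set_emb_children:
  "set (emb_children \<sigma> ch k g) = (\<lambda>i. ch (Suc (k + i)) (map \<sigma> (snd (preds g ! i)))) ` {..<npred g}"
proof -
  have "emb_children \<sigma> ch k g = map (\<lambda>i. ch (Suc (k + i)) (map \<sigma> (snd (preds g ! i)))) [0..<npred g]"
    by (rule nth_equalityI) (simp_all add: nth_emb_children)
  then show ?thesis
    by (simp add: atLeast0LessThan)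
qed

lemma catoms_emb:
  "quantifier_free g \<Longrightarrow> catoms (emb w \<sigma> ch k g) =
     {(C, q, \<sigma> x) | C q x. (C, q, x) \<in> catoms g} \<union> (\<Union>c \<in> set (emb_children \<sigma> ch k g). catoms c)"
proof (induction g arbitrary: k)
  case (Sep a b)
  then show ?case
    by (auto simp: emb_children_Sep)
qed (auto simp: emb_children_def)

lemma comp_vars_emb:
  "quantifier_free g \<Longrightarrow> comp_vars (emb w \<sigma> ch k g) C =
     \<sigma> ` comp_vars g C \<union> (\<Union>c \<in> set (emb_children \<sigma> ch k g). comp_vars c C)"
  by (auto simp: comp_vars_def catoms_emb)

lemma iatoms_emb:
  "quantifier_free g \<Longrightarrow> iatoms (emb w \<sigma> ch k g) =
     {(I, map \<sigma> xs) | I xs. (I, xs) \<in> iatoms g} \<union> (\<Union>c \<in> set (emb_children \<sigma> ch k g). iatoms c)"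
proof (induction g arbitrary: k)
  case (Sep a b)
  then show ?case
    by (auto simp: emb_children_Sep)
qed (auto simp: emb_children_def)

lemma bvars_emb:
  "quantifier_free g \<Longrightarrow> bvars (emb w \<sigma> ch k g) = (\<Union>c \<in> set (emb_children \<sigma> ch k g). bvars c)"
proof (induction g arbitrary: k)
  case (Sep a b)
  then show ?case
    by (auto simp: emb_children_Sep)
qed (auto simp: emb_children_def)

lemma vars_emb:
  "quantifier_free g \<Longrightarrow> vars (emb w \<sigma> ch k g) \<subseteq> range \<sigma> \<union> (\<Union>c \<in> set (emb_children \<sigma> ch k g). vars c)"
proof (induction g arbitrary: k)
  case (Sep a b)
  then have "vars (emb w \<sigma> ch k a) \<subseteq> range \<sigma> \<union> (\<Union>c \<in> set (emb_children \<sigma> ch k a). vars c)"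
    "vars (emb w \<sigma> ch (k + npred a) b) \<subseteq> range \<sigma> \<union> (\<Union>c \<in> set (emb_children \<sigma> ch (k + npred a) b). vars c)"
    by simp_all
  then show ?case
    by (auto simp: emb_children_Sep)
qed (auto simp: emb_children_def)

lemma preds_emb:
  "quantifier_free g \<Longrightarrow> preds (emb w \<sigma> ch k g) = concat (map preds (emb_children \<sigma> ch k g))"
proof (induction g arbitrary: k)
  case (Sep a b)
  then show ?case
    by (simp add: emb_children_Sep)
qed (auto simp: emb_children_def)

lemma stateful_emb:
  "quantifier_free g \<Longrightarrow>
   stateful (emb w \<sigma> ch k g) \<longleftrightarrow> stateful g \<and> (\<forall>c \<in> set (emb_children \<sigma> ch k g). stateful c)"
proof (induction g arbitrary: k)
  case (Sep a b)
  then show ?case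
    by (auto simp: emb_children_Sep)
qed (auto simp: emb_children_def)

lemma binders_apart_emb:
  assumes "quantifier_free g"
    and "\<forall>c \<in> set (emb_children \<sigma> ch k g). binders_apart c \<and> bvars c \<inter> range \<sigma> = {}"
    and "sorted_wrt (\<lambda>c d. bvars c \<inter> vars d = {} \<and> bvars d \<inter> vars c = {}) (emb_children \<sigma> ch k g)"
  shows "binders_apart (emb w \<sigma> ch k g)"
  using assms
proof (induction g arbitrary: k)
  case (Sep a b)
  let ?a = "emb w \<sigma> ch k a" and ?b = "emb w \<sigma> ch (k + npred a) b"
  let ?ca = "emb_children \<sigma> ch k a" and ?cb = "emb_children \<sigma> ch (k + npred a) b"
  have fresh: "\<forall>c \<in> set ?ca \<union> set ?cb. bvars c \<inter> range \<sigma> = {}"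
    and apart: "\<forall>c \<in> set ?ca. \<forall>d \<in> set ?cb. bvars c \<inter> vars d = {} \<and> bvars d \<inter> vars c = {}"
    using Sep.prems by (simp_all add: emb_children_Sep sorted_wrt_append)
  have "binders_apart ?a" "binders_apart ?b"
    using Sep by (simp_all add: emb_children_Sep sorted_wrt_append)
  moreover have "bvars ?a \<inter> vars ?b = {}"
  proof -
    have "bvars ?a = (\<Union>c \<in> set ?ca. bvars c)"
      using Sep.prems(1) by (simp add: bvars_emb)
    moreover have "vars ?b \<subseteq> range \<sigma> \<union> (\<Union>d \<in> set ?cb. vars d)"
      using Sep.prems(1) by (simp add: vars_emb)
    moreover have "(\<Union>c \<in> set ?ca. bvars c) \<inter> (range \<sigma> \<union> (\<Union>d \<in> set ?cb. vars d)) = {}"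
      using fresh apart by (auto; blast)
    ultimately show ?thesis
      by (metis Int_mono order_refl subset_empty)
  qed
  moreover have "bvars ?b \<inter> vars ?a = {}"
  proof -
    have "bvars ?b = (\<Union>d \<in> set ?cb. bvars d)"
      using Sep.prems(1) by (simp add: bvars_emb)
    moreover have "vars ?a \<subseteq> range \<sigma> \<union> (\<Union>c \<in> set ?ca. vars c)"
      using Sep.prems(1) by (simp add: vars_emb)
    moreover have "(\<Union>d \<in> set ?cb. bvars d) \<inter> (range \<sigma> \<union> (\<Union>c \<in> set ?ca. vars c)) = {}"
      using fresh apart by (auto; blast)
    ultimately show ?thesis
      by (metis Int_mono order_refl subset_empty)
  qed
  ultimately show ?case
    by simp
qed (auto simp: emb_children_def)

section \<open>Rule bodies of forms (I) and (II)\<close>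

lemma count_list_eq_1_nth_unique:
  "count_list xs x = 1 \<Longrightarrow> j < length xs \<Longrightarrow> j' < length xs \<Longrightarrow> xs ! j = x \<Longrightarrow> xs ! j' = x \<Longrightarrow> j = j'"
proof (induction xs arbitrary: j j')
  case (Cons y xs)
  show ?case
  proof (cases "y = x")
    case True
    then have "x \<notin> set xs"
      using Cons.prems(1) count_list_0_iff by fastforce
    with Cons.prems show ?thesis
      by (cases j; cases j'; auto)
  next
    case False
    with Cons show ?thesis
      by (cases j; cases j'; auto)
  qed
qed simp

lemma count_list_concat_eq_1_nth_unique:
  assumes "count_list (concat xss) x = 1"
    and "i < length xss" "j < length (xss ! i)" "xss ! i ! j = x"
    and "i' < length xss" "j' < length (xss ! i')" "xss ! i' ! j' = x"
  shows "i = i' \<and> j = j'"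
  using assms
proof (induction xss arbitrary: i i')
  case (Cons xs xss)
  have count: "count_list xs x + count_list (concat xss) x = 1"
    using Cons.prems(1) by simp
  have head: "count_list xs x \<noteq> 0" if "k = 0" "l < length ((xs # xss) ! k)" "(xs # xss) ! k ! l = x" for k l
    using that by (auto simp: count_list_0_iff)
  have tail: "count_list (concat xss) x \<noteq> 0"
    if "k \<noteq> 0" "k < length (xs # xss)" "l < length ((xs # xss) ! k)" "(xs # xss) ! k ! l = x" for k l
    using that by (cases k) (auto simp: count_list_0_iff, metis nth_mem)
  have hd_i: "count_list xs x \<noteq> 0" if "i = 0"
    using head[of i j] Cons.prems(3,4) that by blast
  have hd_i': "count_list xs x \<noteq> 0" if "i' = 0"
    using head[of i' j'] Cons.prems(6,7) that by blast
  have tl_i: "count_list (concat xss) x \<noteq> 0" if "i \<noteq> 0"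
    using tail[of i j] Cons.prems(2-4) that by blast
  have tl_i': "count_list (concat xss) x \<noteq> 0" if "i' \<noteq> 0"
    using tail[of i' j'] Cons.prems(5-7) that by blast
  show ?case
  proof (cases i)
    case 0
    then have "i' = 0" "count_list xs x = 1"
      using count hd_i tl_i' by auto
    with 0 Cons.prems show ?thesis
      using count_list_eq_1_nth_unique[of xs x j j'] by simp
  next
    case (Suc k)
    then obtain k' where "i' = Suc k'" "count_list (concat xss) x = 1"
      using count hd_i' tl_i by (cases i') auto
    with Suc Cons.prems Cons.IH[of k k'] show ?thesis
      by simp
  qed
qed simp

lemma preds_bigsep_Pred [simp]: "preds (bigsep (map (\<lambda>(B, zs). Pred B zs) pas)) = pas"
  by (induction pas) auto

lemma preds_bigsep_Inter [simp]: "preds (bigsep (map (\<lambda>(I, zs). Inter I zs) \<psi>s)) = []"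
  by (induction \<psi>s) auto

text \<open>\<open>x\<close> is the \<open>j\<close>-th argument (counted from 0) of the \<open>i\<close>-th predicate atom (counted from 1)
  of \<open>g\<close>; this is the indexing of \<open>seps\<close>.\<close>

definition arg_pos :: "('c,'q,'i,'a,'v) form \<Rightarrow> 'v \<Rightarrow> nat \<Rightarrow> nat \<Rightarrow> bool" where
  "arg_pos g x i j \<longleftrightarrow>
     1 \<le> i \<and> i \<le> npred g \<and> j < length (snd (preds g ! (i - 1))) \<and> snd (preds g ! (i - 1)) ! j = x"

lemma arg_pos_in_args: "arg_pos g x i j \<Longrightarrow> x \<in> set (concat (map snd (preds g)))"
  unfolding arg_pos_def by (auto simp: set_concat) (metis Suc_le_eq Suc_pred nth_mem)

lemma arg_pos_exists: "x \<in> set (concat (map snd (preds g))) \<Longrightarrow> \<exists>i j. arg_pos g x i j"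
proof -
  assume "x \<in> set (concat (map snd (preds g)))"
  then obtain p where "p \<in> set (preds g)" "x \<in> set (snd p)"
    by auto
  then obtain i j where "i < npred g" "j < length (snd (preds g ! i))" "snd (preds g ! i) ! j = x"
    by (metis in_set_conv_nth)
  then have "arg_pos g x (Suc i) j"
    unfolding arg_pos_def by auto
  then show ?thesis
    by blast
qed

lemma arg_pos_unique:
  assumes "count_list (concat (map snd (preds g))) x = 1" "arg_pos g x i j" "arg_pos g x i' j'"
  shows "i = i' \<and> j = j'"
proof -
  have "i - 1 = i' - 1 \<and> j = j'"
    using count_list_concat_eq_1_nth_unique[of "map snd (preds g)" x "i - 1" j "i' - 1" j'] assms
    unfolding arg_pos_def by auto
  then show ?thesis
    using assms(2,3) unfolding arg_pos_def by auto
qed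

text \<open>What the proofs use about a body \<open>f\<close> of form (I) or (II), with its existential prefix \<open>ys\<close>
  split off.\<close>

locale normal_body =
  fixes xs ys :: "'v list" and g f :: "('c,'q,'i,'a,'v) form"
  assumes body: "f = exs ys g"
    and quantifier_free: "quantifier_free g" and stateful: "stateful g"
    and distinct: "distinct (xs @ ys)"
    and comp_param: "(C, q, x) \<in> catoms g \<Longrightarrow> x \<in> set xs"
    and comp_unique: "a \<in> catoms g \<Longrightarrow> b \<in> catoms g \<Longrightarrow> a = b"
    and arg_pos_unique: "arg_pos g x i j \<Longrightarrow> arg_pos g x i' j' \<Longrightarrow> i = i' \<and> j = j'"
    and arg_var: "(B, zs) \<in> set (preds g) \<Longrightarrow> z \<in> set zs \<Longrightarrow> z \<in> set xs \<union> set ys"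
    and arg_not_comp: "(B, zs) \<in> set (preds g) \<Longrightarrow> z \<in> set zs \<Longrightarrow> (C, q, z) \<notin> catoms g"
    and param_arg_pos: "x \<in> set xs \<Longrightarrow> \<forall>C q. (C, q, x) \<notin> catoms g \<Longrightarrow> \<exists>i j. arg_pos g x i j"

lemma normal_body_rule_I: "rule_I (A, xs, f) \<Longrightarrow> normal_body xs [] f f"
  by unfold_locales (auto simp: rule_I_def arg_pos_def)

lemma normal_body_rule_II:
  assumes "rule_II (A, xs, f)"
  obtains ys g where "normal_body xs ys g f"
proof -
  from assms obtain ys \<phi> \<psi>s pas where
    f: "f = exs ys (Sep (Sep \<phi> (bigsep (map (\<lambda>(I, zs). Inter I zs) \<psi>s))) (bigsep (map (\<lambda>(B, zs). Pred B zs) pas)))"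
    and dist: "distinct (xs @ ys)"
    and \<phi>: "\<phi> = Emp \<or> (\<exists>C q. xs \<noteq> [] \<and> \<phi> = CompSt C q (hd xs))"
    and once: "\<forall>v \<in> (set xs - fv \<phi>) \<union> set ys. count_list (concat (map snd pas)) v = 1"
    and args: "set (concat (map snd pas)) \<subseteq> (set xs - fv \<phi>) \<union> set ys"
    unfolding rule_II_def Let_def by auto
  define g where
    "g = Sep (Sep \<phi> (bigsep (map (\<lambda>(I, zs). Inter I zs) \<psi>s))) (bigsep (map (\<lambda>(B, zs). Pred B zs) pas))"
  have preds_g: "preds g = pas"
    using \<phi> by (auto simp: g_def simp del: bigsep_simps)
  have catoms_g: "catoms g = catoms \<phi>"
    by (auto simp: g_def split: prod.splits)
  have fv_\<phi>: "fv \<phi> \<subseteq> set xs" "fv \<phi> = {x. \<exists>C q. (C, q, x) \<in> catoms \<phi>}"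
    using \<phi> by auto
  have arg_var: "z \<in> (set xs - fv \<phi>) \<union> set ys" if "(B, zs) \<in> set (preds g)" "z \<in> set zs" for B zs z
    using that args preds_g by force
  have "set xs \<inter> set ys = {}"
    using dist by simp
  have "normal_body xs ys g f"
  proof (rule normal_body.intro)
    show "f = exs ys g"
      using f by (simp add: g_def)
    show "quantifier_free g" "stateful g"
      using \<phi> by (auto simp: g_def split: prod.splits)
    show "distinct (xs @ ys)"
      by (rule dist)
    show "x \<in> set xs" if "(C, q, x) \<in> catoms g" for C q x
      using that \<phi> catoms_g by auto
    show "a = b" if "a \<in> catoms g" "b \<in> catoms g" for a b
      using that \<phi> catoms_g by auto
    show "z \<in> set xs \<union> set ys" if "(B, zs) \<in> set (preds g)" "z \<in> set zs" for B zs z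
      using arg_var[OF that] by blast
    show "(C, q, z) \<notin> catoms g" if "(B, zs) \<in> set (preds g)" "z \<in> set zs" for B zs z C q
      using arg_var[OF that] fv_\<phi> catoms_g \<open>set xs \<inter> set ys = {}\<close> by blast
    show "i = i' \<and> j = j'" if pos: "arg_pos g x i j" "arg_pos g x i' j'" for x i j i' j'
      using arg_pos_unique[OF _ pos] arg_pos_in_args[OF pos(1)] once args unfolding preds_g by blast
    show "\<exists>i j. arg_pos g x i j" if "x \<in> set xs" "\<forall>C q. (C, q, x) \<notin> catoms g" for x
    proof -
      have "count_list (concat (map snd pas)) x = 1"
        using once that fv_\<phi> catoms_g by blast
      then show ?thesis
        using arg_pos_exists[of x g] unfolding preds_g by (metis count_list_0_iff zero_neq_one)
    qed
  qed
  then show ?thesis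
    by (rule that)
qed

section \<open>Rewriting trees\<close>

text \<open>Enough fuel for \<open>chi_aux\<close> and \<open>seps\<close> to unfold the subtree at \<open>w\<close> completely.\<close>

definition subtree_height_lt :: "('c,'q,'i,'a,'v) rtree \<Rightarrow> nat list \<Rightarrow> nat \<Rightarrow> bool" where
  "subtree_height_lt T w n \<longleftrightarrow> (\<forall>v. w @ v \<in> dom T \<longrightarrow> length v < n)"

lemma subtree_height_lt_child: "subtree_height_lt T w (Suc n) \<Longrightarrow> subtree_height_lt T (w @ [i]) n"
  unfolding subtree_height_lt_def by (metis append.assoc append_Cons append_Nil length_Cons Suc_less_eq)

lemma subtree_height_lt_0: "w \<in> dom T \<Longrightarrow> \<not> subtree_height_lt T w 0"
  unfolding subtree_height_lt_def by (metis append_Nil2 less_zeroE)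

text \<open>The store that \<open>chi_aux\<close> applies to the body of the rule at \<open>w\<close>, once \<open>emb\<close> has
  renamed the existential variables \<open>ys\<close> to \<open>(w, y)\<close>.\<close>

definition inst_store :: "nat list \<Rightarrow> 'v list \<Rightarrow> 'v list \<Rightarrow> (nat list \<times> 'v) list \<Rightarrow> 'v \<Rightarrow> nat list \<times> 'v" where
  "inst_store w xs ys args v =
     (if v \<in> set ys then (w, v) else (case map_of (zip xs args) v of Some z \<Rightarrow> z | None \<Rightarrow> (w, v)))"

lemma inst_store_param:
  assumes "distinct (xs @ ys)" "length args = length xs" "j < length xs"
  shows "inst_store w xs ys args (xs ! j) = args ! j"
proof -
  have "xs ! j \<notin> set ys"
    using assms(1,3) by (auto dest: nth_mem)
  moreover have "map_of (zip xs args) (xs ! j) = Some (args ! j)"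
    using map_of_zip_nth[of xs args j] assms by simp
  ultimately show ?thesis
    by (simp add: inst_store_def)
qed

lemma inst_store_bound: "v \<in> set ys \<Longrightarrow> inst_store w xs ys args v = (w, v)"
  by (simp add: inst_store_def)

lemma inst_store_range: "inst_store w xs ys args v \<in> set args \<or> inst_store w xs ys args v = (w, v)"
  unfolding inst_store_def by (auto split: option.splits dest: map_of_SomeD set_zip_rightD)

definition subtree_vars :: "nat list \<Rightarrow> (nat list \<times> 'v) set" where
  "subtree_vars w = {z. \<exists>v. fst z = w @ v}"

lemma inst_store_subtree_vars: "range (inst_store w xs ys args) \<subseteq> set args \<union> subtree_vars w"
  using inst_store_range by (fastforce simp: subtree_vars_def)

lemma length_inst_store:
  "\<forall>a \<in> set args. length (fst a) < length w \<Longrightarrow> length (fst (inst_store w xs ys args v)) \<le> length w"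
  using inst_store_range[of w xs ys args v] by (metis fst_conv less_imp_le order_refl)

lemma subtree_vars_child_subset: "subtree_vars (w @ [k]) \<subseteq> subtree_vars w"
  by (auto simp: subtree_vars_def)

lemma subtree_vars_children_disjoint: "k \<noteq> k' \<Longrightarrow> subtree_vars (w @ [k]) \<inter> subtree_vars (w @ [k']) = {}"
  by (auto simp: subtree_vars_def)

lemma notin_subtree_vars_child: "length (fst z) \<le> length w \<Longrightarrow> z \<notin> subtree_vars (w @ [k])"
  by (auto simp: subtree_vars_def)

text \<open>The arguments lie where the canonical model places the head parameters \<open>x\<^sub>j\<close> of the rule at
  \<open>w\<close>, namely at \<open>w \<cdot> s\<^sup>\<epsilon>\<^bsub>T|w\<^esub>(x\<^sub>j)\<close>.\<close>

definition canonical_args :: "('c,'q,'i,'a,'v) rtree \<Rightarrow> nat list \<Rightarrow> (nat list \<times> 'v) list \<Rightarrow> bool" where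
  "canonical_args T w args \<longleftrightarrow> length args = length (rparams (the (T w))) \<and>
     (\<forall>j < length args. sT T (args ! j) = w @ seps T (card (dom T)) w (rparams (the (T w)) ! j))"

lemma comp_of_eq: "wf_sig P PI Q \<Longrightarrow> p \<in> P C \<Longrightarrow> comp_of P p = C"
  unfolding comp_of_def wf_sig_def by blast

locale rewriting_tree =
  fixes PI :: "'i \<Rightarrow> 'p list" and ar :: "'a \<Rightarrow> nat" and \<kappa> :: nat
    and \<Delta> :: "('c,'q,'i,'a,'v) rule set" and \<rho> :: "('c,'q,'i,'a,'v) rule" and T :: "('c,'q,'i,'a,'v) rtree"
  assumes sid: "wf_sid PI ar \<kappa> \<Delta>" and forms: "\<forall>r \<in> \<Delta>. rule_I r \<or> rule_II r"
    and rtree: "is_rtree \<Delta> \<kappa> \<rho> T"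
begin

lemma node_normal_body:
  assumes "w \<in> dom T"
  obtains A xs f ys g where "T w = Some (A, xs, f)" "normal_body xs ys g f"
proof -
  obtain A xs f where r: "T w = Some (A, xs, f)" "(A, xs, f) \<in> \<Delta>"
    using assms rtree unfolding is_rtree_def by (metis domD prod_cases3)
  then have "rule_I (A, xs, f) \<or> rule_II (A, xs, f)"
    using forms by blast
  then show ?thesis
    using normal_body_rule_I normal_body_rule_II r that by metis
qed

lemma length_lt_card_dom:
  assumes "u \<in> dom T"
  shows "length u < card (dom T)"
proof -
  have "\<forall>w v. w @ v \<in> dom T \<longrightarrow> w \<in> dom T"
    using rtree unfolding is_rtree_def by blast
  then have "take k u \<in> dom T" for k
    using assms by (metis append_take_drop_id)
  then have "(\<lambda>k. take k u) ` {0..length u} \<subseteq> dom T"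
    by blast
  moreover have "finite (dom T)"
    using rtree unfolding is_rtree_def by blast
  ultimately have "card ((\<lambda>k. take k u) ` {0..length u}) \<le> card (dom T)"
    by (rule card_mono[rotated])
  moreover have "inj_on (\<lambda>k. take k u) {0..length u}"
    by (rule inj_onI) (metis atLeastAtMost_iff length_take min.absorb2)
  ultimately show ?thesis
    by (simp add: card_image)
qed

lemma subtree_height_lt_card: "subtree_height_lt T w (card (dom T))"
  unfolding subtree_height_lt_def using length_lt_card_dom by fastforce

lemma child_node:
  assumes "T w = Some (A, xs, f)" "normal_body xs ys g f" "i < npred g"
  shows "w @ [Suc i] \<in> dom T" "fst (the (T (w @ [Suc i]))) = fst (preds g ! i)"
    "length (rparams (the (T (w @ [Suc i])))) = length (snd (preds g ! i))"
proof -
  have f: "f = exs ys g"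
    using assms(2) by (rule normal_body.body)
  show child: "w @ [Suc i] \<in> dom T"
    using rtree assms(1,3) f unfolding is_rtree_def by auto
  then obtain B xs' f' where r': "T (w @ [Suc i]) = Some (B, xs', f')"
    by (metis domD prod_cases3)
  have "\<forall>i r'. 1 \<le> i \<longrightarrow> i \<le> npred f \<longrightarrow> T (w @ [i]) = Some r' \<longrightarrow> fst r' = fst (preds f ! (i - 1))"
    using rtree assms(1) unfolding is_rtree_def by auto
  then show head: "fst (the (T (w @ [Suc i]))) = fst (preds g ! i)"
    using r' assms(3) f by (metis One_nat_def Suc_leI diff_Suc_1 exs_simps(3) option.sel zero_less_Suc)
  have "(A, xs, f) \<in> \<Delta>" "(B, xs', f') \<in> \<Delta>"
    using rtree assms(1) r' unfolding is_rtree_def by blast+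
  moreover have rule_arities: "\<forall>(A, xs, f) \<in> \<Delta>. length xs = ar A \<and> (\<forall>(B, ys) \<in> set (preds f). length ys = ar B)"
    using sid unfolding wf_sid_def by blast
  moreover have "preds g ! i \<in> set (preds f)"
    using f assms(3) by simp
  ultimately have "length xs' = ar B" "length (snd (preds g ! i)) = ar (fst (preds g ! i))"
    by (fastforce, cases "preds g ! i", fastforce)
  then show "length (rparams (the (T (w @ [Suc i])))) = length (snd (preds g ! i))"
    using head r' by simp
qed

lemma seps_comp_var:
  assumes "T w = Some (A, xs, f)" "normal_body xs ys g f" "(C, q, x) \<in> catoms g"
  shows "seps T (Suc n) w x = []"
  using assms normal_body.body[OF assms(2)] by (auto simp: Let_def)

lemma seps_arg_pos:
  assumes "T w = Some (A, xs, f)" "normal_body xs ys g f" "\<forall>C q. (C, q, x) \<notin> catoms g" "arg_pos g x i j"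
  shows "seps T (Suc n) w x = i # seps T n (w @ [i]) (rparams (the (T (w @ [i]))) ! j)"
proof -
  have f: "f = exs ys g" and unique: "\<And>i' j'. arg_pos g x i' j' \<Longrightarrow> i' = i \<and> j' = j"
    using normal_body.body[OF assms(2)] normal_body.arg_pos_unique[OF assms(2) assms(4)] by blast+
  have "(SOME (i', j'). 1 \<le> i' \<and> i' \<le> npred f \<and> j' < length (snd (preds f ! (i' - 1))) \<and>
      snd (preds f ! (i' - 1)) ! j' = x) = (i, j)" (is "Eps ?P = _")
  proof (rule some_equality)
    show "?P (i, j)"
      using assms(4) f unfolding arg_pos_def by simp
    show "p = (i, j)" if "?P p" for p
      using that unique f unfolding arg_pos_def by (cases p) auto
  qed
  then show ?thesis
    using assms(1,3) f by (simp add: Let_def)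
qed

lemma seps_fuel_indep:
  assumes "w \<in> dom T" "x \<in> set (rparams (the (T w)))"
    and "subtree_height_lt T w n" "subtree_height_lt T w m"
  shows "seps T n w x = seps T m w x"
  using assms
proof (induction n arbitrary: m w x)
  case 0
  then show ?case
    using subtree_height_lt_0 by blast
next
  case (Suc n)
  obtain m' where m: "m = Suc m'"
    using Suc.prems(1,4) subtree_height_lt_0 by (cases m) auto
  obtain A xs f ys g where r: "T w = Some (A, xs, f)" and nb: "normal_body xs ys g f"
    by (rule node_normal_body[OF Suc.prems(1)])
  show ?case
  proof (cases "\<exists>C q. (C, q, x) \<in> catoms g")
    case True
    then show ?thesis
      using seps_comp_var[OF r nb] m by auto
  next
    case False
    moreover have "x \<in> set xs"
      using Suc.prems(2) r by simp
    ultimately obtain i j where pos: "arg_pos g x i j"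
      using normal_body.param_arg_pos[OF nb] by blast
    then obtain i0 where i0: "i = Suc i0" "i0 < npred g"
      unfolding arg_pos_def by (cases i) auto
    let ?c = "w @ [i]"
    have c: "?c \<in> dom T" "length (rparams (the (T ?c))) = length (snd (preds g ! i0))"
      using child_node[OF r nb i0(2)] i0(1) by auto
    moreover have "rparams (the (T ?c)) ! j \<in> set (rparams (the (T ?c)))"
      using c(2) pos i0 unfolding arg_pos_def by simp
    ultimately have "seps T n ?c (rparams (the (T ?c)) ! j) = seps T m' ?c (rparams (the (T ?c)) ! j)"
      using Suc.IH subtree_height_lt_child Suc.prems(3,4) m by blast
    then show ?thesis
      using seps_arg_pos[OF r nb _ pos] False m by simp
  qed
qed

lemma chi_aux_Suc:
  assumes "T w = Some (A, xs, f)" "normal_body xs ys g f"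
  shows "chi_aux T (Suc n) w args =
    exs (map (Pair w) ys) (emb w (inst_store w xs ys args) (\<lambda>i. chi_aux T n (w @ [i])) 0 g)"
  using assms normal_body.body[OF assms(2)] by (simp add: Let_def emb_exs inst_store_def[abs_def])

lemma chi_aux_Suc_atoms:
  fixes args :: "(nat list \<times> 'v) list" and n :: nat
  assumes "T w = Some (A, xs, f)" "normal_body xs ys g f"
  defines "\<sigma> \<equiv> inst_store w xs ys args"
    and "child \<equiv> \<lambda>i. chi_aux T n (w @ [Suc i]) (map (inst_store w xs ys args) (snd (preds g ! i)))"
  shows "catoms (chi_aux T (Suc n) w args) =
      {(C, q, \<sigma> x) | C q x. (C, q, x) \<in> catoms g} \<union> (\<Union>i < npred g. catoms (child i))"
    and "comp_vars (chi_aux T (Suc n) w args) C = \<sigma> ` comp_vars g C \<union> (\<Union>i < npred g. comp_vars (child i) C)"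
    and "iatoms (chi_aux T (Suc n) w args) =
      {(I, map \<sigma> zs) | I zs. (I, zs) \<in> iatoms g} \<union> (\<Union>i < npred g. iatoms (child i))"
  using normal_body.quantifier_free[OF assms(2)] unfolding chi_aux_Suc[OF assms(1,2)] \<sigma>_def child_def
  by (simp_all add: catoms_emb comp_vars_emb iatoms_emb set_emb_children)

lemma chi_aux_pred_free:
  assumes "w \<in> dom T" "subtree_height_lt T w n"
  shows "preds (chi_aux T n w args) = [] \<and> stateful (chi_aux T n w args)"
  using assms
proof (induction n arbitrary: w args)
  case 0
  then show ?case
    using subtree_height_lt_0 by blast
next
  case (Suc n)
  obtain A xs f ys g where r: "T w = Some (A, xs, f)" and nb: "normal_body xs ys g f"
    by (rule node_normal_body[OF Suc.prems(1)])
  have "preds c = [] \<and> stateful c"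
    if "c \<in> set (emb_children (inst_store w xs ys args) (\<lambda>i. chi_aux T n (w @ [i])) 0 g)" for c
    using that Suc.IH child_node[OF r nb] subtree_height_lt_child[OF Suc.prems(2)]
    by (auto simp: set_emb_children)
  then show ?case
    using normal_body.quantifier_free[OF nb] normal_body.stateful[OF nb] unfolding chi_aux_Suc[OF r nb]
    by (simp add: preds_emb stateful_emb)
qed

lemma chi_aux_vars:
  assumes "w \<in> dom T" "subtree_height_lt T w n" "\<forall>a \<in> set args. length (fst a) < length w"
  shows "bvars (chi_aux T n w args) \<subseteq> subtree_vars w \<and> vars (chi_aux T n w args) \<subseteq> set args \<union> subtree_vars w"
  using assms
proof (induction n arbitrary: w args)
  case 0
  then show ?case
    using subtree_height_lt_0 by blast
next
  case (Suc n)
  obtain A xs f ys g where r: "T w = Some (A, xs, f)" and nb: "normal_body xs ys g f"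
    by (rule node_normal_body[OF Suc.prems(1)])
  let ?\<sigma> = "inst_store w xs ys args"
  let ?E = "emb w ?\<sigma> (\<lambda>i. chi_aux T n (w @ [i])) 0 g"
  have children: "bvars c \<subseteq> subtree_vars w \<and> vars c \<subseteq> set args \<union> subtree_vars w"
    if c_child: "c \<in> set (emb_children ?\<sigma> (\<lambda>i. chi_aux T n (w @ [i])) 0 g)" for c
  proof -
    obtain i where i: "i < npred g" and c: "c = chi_aux T n (w @ [Suc i]) (map ?\<sigma> (snd (preds g ! i)))"
      using c_child by (auto simp: set_emb_children)
    have "\<forall>a \<in> set (map ?\<sigma> (snd (preds g ! i))). length (fst a) < length (w @ [Suc i])"
      using length_inst_store[OF Suc.prems(3)] by (auto simp: le_imp_less_Suc)
    then have "bvars c \<subseteq> subtree_vars (w @ [Suc i]) \<and>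
        vars c \<subseteq> set (map ?\<sigma> (snd (preds g ! i))) \<union> subtree_vars (w @ [Suc i])"
      unfolding c by (rule Suc.IH[OF child_node(1)[OF r nb i] subtree_height_lt_child[OF Suc.prems(2)]])
    moreover have "set (map ?\<sigma> (snd (preds g ! i))) \<subseteq> set args \<union> subtree_vars w"
      using inst_store_subtree_vars[of w xs ys args] by (metis image_mono set_map subset_UNIV subset_trans)
    ultimately show ?thesis
      using subtree_vars_child_subset by blast
  qed
  have "bvars ?E \<subseteq> subtree_vars w"
    using children unfolding bvars_emb[OF normal_body.quantifier_free[OF nb]] by blast
  moreover have "vars ?E \<subseteq> set args \<union> subtree_vars w"
  proof -
    have "vars ?E \<subseteq> range ?\<sigma> \<union> (\<Union>c \<in> set (emb_children ?\<sigma> (\<lambda>i. chi_aux T n (w @ [i])) 0 g). vars c)"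
      by (rule vars_emb[OF normal_body.quantifier_free[OF nb]])
    also have "\<dots> \<subseteq> set args \<union> subtree_vars w"
      using inst_store_subtree_vars[of w xs ys args] children by (intro Un_least UN_least) auto
    finally show ?thesis .
  qed
  moreover have "set (map (Pair w) ys) \<subseteq> subtree_vars w"
    by (auto simp: subtree_vars_def)
  ultimately show ?case
    unfolding chi_aux_Suc[OF r nb] by auto
qed

lemma chi_aux_binders_apart:
  assumes "w \<in> dom T" "subtree_height_lt T w n" "\<forall>a \<in> set args. length (fst a) < length w"
  shows "binders_apart (chi_aux T n w args)"
  using assms
proof (induction n arbitrary: w args)
  case 0
  then show ?case
    using subtree_height_lt_0 by blast
next
  case (Suc n)
  obtain A xs f ys g where r: "T w = Some (A, xs, f)" and nb: "normal_body xs ys g f"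
    by (rule node_normal_body[OF Suc.prems(1)])
  define \<sigma> where "\<sigma> = inst_store w xs ys args"
  define child where "child i = chi_aux T n (w @ [Suc i]) (map \<sigma> (snd (preds g ! i)))" for i
  have fresh: "z \<notin> subtree_vars (w @ [k])" if "z \<in> range \<sigma>" for z k
    using that notin_subtree_vars_child length_inst_store[OF Suc.prems(3)] unfolding \<sigma>_def by blast
  have child: "binders_apart (child i) \<and> bvars (child i) \<subseteq> subtree_vars (w @ [Suc i]) \<and>
      vars (child i) \<subseteq> range \<sigma> \<union> subtree_vars (w @ [Suc i])" if "i < npred g" for i
  proof -
    have dom: "w @ [Suc i] \<in> dom T" and height: "subtree_height_lt T (w @ [Suc i]) n"
      using child_node(1)[OF r nb that] subtree_height_lt_child[OF Suc.prems(2)] by simp_all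
    have args: "\<forall>a \<in> set (map \<sigma> (snd (preds g ! i))). length (fst a) < length (w @ [Suc i])"
      using length_inst_store[OF Suc.prems(3)] by (auto simp: \<sigma>_def le_imp_less_Suc)
    have "set (map \<sigma> (snd (preds g ! i))) \<subseteq> range \<sigma>"
      by auto
    then show ?thesis
      using Suc.IH[OF dom height args] chi_aux_vars[OF dom height args] unfolding child_def by blast
  qed
  have apart: "bvars (child i) \<inter> vars (child j) = {}" if "i \<noteq> j" "i < npred g" "j < npred g" for i j
  proof (rule equals0I)
    fix z
    assume "z \<in> bvars (child i) \<inter> vars (child j)"
    then have "z \<in> subtree_vars (w @ [Suc i])" "z \<in> range \<sigma> \<or> z \<in> subtree_vars (w @ [Suc j])"
      using child[OF that(2)] child[OF that(3)] by auto
    then show False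
      using fresh subtree_vars_children_disjoint[of "Suc i" "Suc j" w] that(1) by blast
  qed
  then have "sorted_wrt (\<lambda>c d. bvars c \<inter> vars d = {} \<and> bvars d \<inter> vars c = {})
      (emb_children \<sigma> (\<lambda>i. chi_aux T n (w @ [i])) 0 g)"
    unfolding child_def by (simp add: sorted_wrt_iff_nth_less nth_emb_children)
  moreover have "binders_apart (child i) \<and> bvars (child i) \<inter> range \<sigma> = {}" if "i < npred g" for i
    using child[OF that] fresh by blast
  then have "\<forall>c \<in> set (emb_children \<sigma> (\<lambda>i. chi_aux T n (w @ [i])) 0 g). binders_apart c \<and> bvars c \<inter> range \<sigma> = {}"
    by (simp add: set_emb_children child_def)
  ultimately show ?case
    unfolding chi_aux_Suc[OF r nb] \<sigma>_def[symmetric]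
    using binders_apart_emb[OF normal_body.quantifier_free[OF nb]] by simp
qed

lemma card_dom_Suc:
  assumes "w \<in> dom T"
  obtains N where "card (dom T) = Suc N"
  using length_lt_card_dom[OF assms] by (metis less_imp_Suc_add)

lemma sT_inst_store:
  assumes "T w = Some (A, xs, f)" "normal_body xs ys g f" "canonical_args T w args" "z \<in> set xs \<union> set ys"
  shows "sT T (inst_store w xs ys args z) = w @ seps T (card (dom T)) w z"
proof (cases "z \<in> set ys")
  case True
  then show ?thesis
    by (simp add: inst_store_bound sT_def)
next
  case False
  then obtain j where j: "j < length xs" "z = xs ! j"
    using assms(4) by (auto simp: in_set_conv_nth)
  moreover have "length args = length xs"
    using assms(1,3) by (simp add: canonical_args_def)
  ultimately show ?thesis
    using assms(1,3) inst_store_param[OF normal_body.distinct[OF assms(2)]] by (simp add: canonical_args_def)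
qed

lemma canonical_args_child:
  assumes "T w = Some (A, xs, f)" "normal_body xs ys g f" "canonical_args T w args" "i < npred g"
  shows "canonical_args T (w @ [Suc i]) (map (inst_store w xs ys args) (snd (preds g ! i)))"
proof -
  interpret nb: normal_body xs ys g f
    by (rule assms(2))
  let ?c = "w @ [Suc i]" and ?zs = "snd (preds g ! i)"
  obtain N where N: "card (dom T) = Suc N"
    using card_dom_Suc assms(1) by blast
  have c: "?c \<in> dom T" "length (rparams (the (T ?c))) = length ?zs"
    using child_node[OF assms(1,2,4)] by auto
  have "sT T (inst_store w xs ys args (?zs ! l)) = ?c @ seps T (card (dom T)) ?c (rparams (the (T ?c)) ! l)"
    if l: "l < length ?zs" for l
  proof -
    have atom: "preds g ! i \<in> set (preds g)" "?zs ! l \<in> set ?zs"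
      using assms(4) l by simp_all
    then have "?zs ! l \<in> set xs \<union> set ys" "\<forall>C q. (C, q, ?zs ! l) \<notin> catoms g"
      using nb.arg_var nb.arg_not_comp by (metis prod.collapse)+
    moreover have "arg_pos g (?zs ! l) (Suc i) l"
      using assms(4) l by (simp add: arg_pos_def)
    moreover have "subtree_height_lt T ?c N"
      using subtree_height_lt_child[of T w N] subtree_height_lt_card N by metis
    then have "seps T N ?c (rparams (the (T ?c)) ! l) = seps T (card (dom T)) ?c (rparams (the (T ?c)) ! l)"
      using seps_fuel_indep[OF c(1) _ _ subtree_height_lt_card] c(2) l by simp
    ultimately show ?thesis
      using sT_inst_store[OF assms(1-3)] seps_arg_pos[OF assms(1,2)] N by simp
  qed
  then show ?thesis
    using c(2) by (simp add: canonical_args_def)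
qed

lemma sT_comp_var:
  assumes "T w = Some (A, xs, f)" "normal_body xs ys g f" "canonical_args T w args" "(C, q, x) \<in> catoms g"
  shows "sT T (inst_store w xs ys args x) = w"
proof -
  obtain N where N: "card (dom T) = Suc N"
    using card_dom_Suc assms(1) by blast
  have "x \<in> set xs"
    using normal_body.comp_param[OF assms(2,4)] .
  then show ?thesis
    using sT_inst_store[OF assms(1-3)] seps_comp_var[OF assms(1,2,4)] N by simp
qed

lemma chi_aux_comp_positions:
  assumes "w \<in> dom T" "subtree_height_lt T w n" "canonical_args T w args"
  shows "\<forall>(C, q, x) \<in> catoms (chi_aux T n w args). sT T x \<in> dom T \<and> (\<exists>v. sT T x = w @ v)"
  using assms
proof (induction n arbitrary: w args)
  case 0
  then show ?case
    using subtree_height_lt_0 by blast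
next
  case (Suc n)
  obtain A xs f ys g where r: "T w = Some (A, xs, f)" and nb: "normal_body xs ys g f"
    by (rule node_normal_body[OF Suc.prems(1)])
  have "\<forall>(C, q, x) \<in> catoms (chi_aux T n (w @ [Suc i]) (map (inst_store w xs ys args) (snd (preds g ! i)))).
      sT T x \<in> dom T \<and> (\<exists>v. sT T x = w @ v)" if "i < npred g" for i
    using Suc.IH[OF child_node(1)[OF r nb that] subtree_height_lt_child[OF Suc.prems(2)]
        canonical_args_child[OF r nb Suc.prems(3) that]] by fastforce
  then show ?case
    using sT_comp_var[OF r nb Suc.prems(3)] Suc.prems(1) unfolding chi_aux_Suc_atoms(1)[OF r nb]
    by fastforce
qed

text \<open>Each node contributes at most one component atom, and \<open>sT\<close> places it at that node.\<close>

lemma chi_aux_comp_inj: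
  assumes "w \<in> dom T" "subtree_height_lt T w n" "canonical_args T w args"
  shows "inj_on (\<lambda>(C, q, x). sT T x) (catoms (chi_aux T n w args))"
  using assms
proof (induction n arbitrary: w args)
  case 0
  then show ?case
    using subtree_height_lt_0 by blast
next
  case (Suc n)
  obtain A xs f ys g where r: "T w = Some (A, xs, f)" and nb: "normal_body xs ys g f"
    by (rule node_normal_body[OF Suc.prems(1)])
  let ?pos = "\<lambda>(C :: 'c, q :: 'q, x). sT T x" and ?\<sigma> = "inst_store w xs ys args"
  define own where "own = {(C, q, ?\<sigma> x) | C q x. (C, q, x) \<in> catoms g}"
  define child where "child i = chi_aux T n (w @ [Suc i]) (map ?\<sigma> (snd (preds g ! i)))" for i
  have own_pos: "?pos ` own \<subseteq> {w}"
    using sT_comp_var[OF r nb Suc.prems(3)] unfolding own_def by auto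
  have own_inj: "inj_on ?pos own"
    using normal_body.comp_unique[OF nb] unfolding own_def inj_on_def by blast
  have child_inj: "inj_on ?pos (catoms (child i))"
    and child_pos: "?pos ` catoms (child i) \<subseteq> {(w @ [Suc i]) @ v | v. True}" if "i < npred g" for i
    using Suc.IH chi_aux_comp_positions child_node(1)[OF r nb that] subtree_height_lt_child[OF Suc.prems(2)]
      canonical_args_child[OF r nb Suc.prems(3) that] unfolding child_def by fastforce+
  have "inj_on ?pos (\<Union>i < npred g. catoms (child i))"
  proof (rule inj_on_UN_separated)
    show "\<forall>i \<in> {..<npred g}. inj_on ?pos (catoms (child i))"
      using child_inj by blast
    have "{(w @ [Suc i]) @ v | v. True} \<inter> {(w @ [Suc j]) @ v | v. True} = {}" if "i \<noteq> j" for i j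
      using that by auto
    then show "\<forall>i \<in> {..<npred g}. \<forall>j \<in> {..<npred g}. i \<noteq> j \<longrightarrow> ?pos ` catoms (child i) \<inter> ?pos ` catoms (child j) = {}"
      using child_pos by (metis (no_types, lifting) Int_mono lessThan_iff subset_empty)
  qed
  moreover have "w \<notin> ?pos ` (\<Union>i < npred g. catoms (child i))"
    using child_pos by fastforce
  ultimately have "inj_on ?pos (own \<union> (\<Union>i < npred g. catoms (child i)))"
    unfolding inj_on_Un using own_inj own_pos by blast
  then show ?case
    unfolding chi_aux_Suc_atoms(1)[OF r nb] own_def child_def .
qed

lemma comp_vars_chi_aux_Suc_pred_arg:
  assumes "T w = Some (A, xs, f)" "normal_body xs ys g f" "(B, zs) \<in> set (preds f)" "l < length zs"
    and "\<And>i. i < npred g \<Longrightarrow> \<forall>j < length (snd (preds g ! i)). inst_store w xs ys args (snd (preds g ! i) ! j) \<in>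
      comp_vars (chi_aux T n (w @ [Suc i]) (map (inst_store w xs ys args) (snd (preds g ! i)))) (prof (fst (preds g ! i)) ! j)"
  shows "inst_store w xs ys args (zs ! l) \<in> comp_vars (chi_aux T (Suc n) w args) (prof B ! l)"
proof -
  obtain i where i: "i < npred g" "preds g ! i = (B, zs)"
    using assms(3) normal_body.body[OF assms(2)] by (auto simp: in_set_conv_nth)
  then have "inst_store w xs ys args (zs ! l) \<in>
      comp_vars (chi_aux T n (w @ [Suc i]) (map (inst_store w xs ys args) (snd (preds g ! i)))) (prof B ! l)"
    using assms(4) assms(5)[OF i(1)] by simp
  then show ?thesis
    unfolding chi_aux_Suc_atoms(2)[OF assms(1,2)] using i(1) by blast
qed

lemma chi_aux_params_covered:
  assumes tight: "tight_sid_for P PI ar prof \<Delta>"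
    and "w \<in> dom T" "subtree_height_lt T w n" "length args = length (rparams (the (T w)))"
  shows "\<forall>j < length args. args ! j \<in> comp_vars (chi_aux T n w args) (prof (fst (the (T w))) ! j)"
  using assms(2-)
proof (induction n arbitrary: w args)
  case 0
  then show ?case
    using subtree_height_lt_0 by blast
next
  case (Suc n)
  obtain A xs f ys g where r: "T w = Some (A, xs, f)" and nb: "normal_body xs ys g f"
    by (rule node_normal_body[OF Suc.prems(1)])
  let ?\<sigma> = "inst_store w xs ys args"
  have "(A, xs, f) \<in> \<Delta>"
    using rtree r unfolding is_rtree_def by blast
  then have head: "\<forall>j < length xs. (\<exists>q. (prof A ! j, q, xs ! j) \<in> catoms f) \<or>
      (\<exists>B zs l. (B, zs) \<in> set (preds f) \<and> l < length zs \<and> zs ! l = xs ! j \<and> prof B ! l = prof A ! j)"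
    using tight unfolding tight_sid_for_def by auto
  have own: "?\<sigma> x \<in> comp_vars (chi_aux T (Suc n) w args) C" if "(C, q, x) \<in> catoms f" for C q x
    using that normal_body.body[OF nb] unfolding chi_aux_Suc_atoms(2)[OF r nb] by (auto simp: comp_vars_def)
  have pred: "?\<sigma> (zs ! l) \<in> comp_vars (chi_aux T (Suc n) w args) (prof B ! l)"
    if "(B, zs) \<in> set (preds f)" "l < length zs" for B zs l
  proof (rule comp_vars_chi_aux_Suc_pred_arg[OF r nb that])
    fix i
    assume i: "i < npred g"
    show "\<forall>j < length (snd (preds g ! i)). ?\<sigma> (snd (preds g ! i) ! j) \<in>
        comp_vars (chi_aux T n (w @ [Suc i]) (map ?\<sigma> (snd (preds g ! i)))) (prof (fst (preds g ! i)) ! j)"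
      using Suc.IH[OF child_node(1)[OF r nb i] subtree_height_lt_child[OF Suc.prems(2)],
          where args = "map ?\<sigma> (snd (preds g ! i))"] child_node(2,3)[OF r nb i] by simp
  qed
  show ?case
  proof (intro allI impI)
    fix j
    assume "j < length args"
    then have j: "j < length xs" "args ! j = ?\<sigma> (xs ! j)"
      using Suc.prems(3) r inst_store_param[OF normal_body.distinct[OF nb]] by simp_all
    then show "args ! j \<in> comp_vars (chi_aux T (Suc n) w args) (prof (fst (the (T w))) ! j)"
      using head own pred r by (metis fst_conv option.sel)
  qed
qed

lemma chi_aux_Suc_pred_arg_covered:
  assumes tight: "tight_sid_for P PI ar prof \<Delta>"
    and r: "T w = Some (A, xs, f)" and nb: "normal_body xs ys g f" and height: "subtree_height_lt T w (Suc n)"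
    and "(B, zs) \<in> set (preds f)" "l < length zs"
  shows "inst_store w xs ys args (zs ! l) \<in> comp_vars (chi_aux T (Suc n) w args) (prof B ! l)"
proof (rule comp_vars_chi_aux_Suc_pred_arg[OF r nb assms(5,6)])
  fix i
  let ?args = "map (inst_store w xs ys args) (snd (preds g ! i))"
  assume i: "i < npred g"
  show "\<forall>j < length (snd (preds g ! i)). inst_store w xs ys args (snd (preds g ! i) ! j) \<in>
      comp_vars (chi_aux T n (w @ [Suc i]) ?args) (prof (fst (preds g ! i)) ! j)"
    using chi_aux_params_covered[OF tight child_node(1)[OF r nb i] subtree_height_lt_child[OF height],
        where args = ?args] child_node(2,3)[OF r nb i] by simp
qed

lemma chi_aux_Suc_own_ports:
  assumes sig: "wf_sig P PI Q" and tight: "tight_sid_for P PI ar prof \<Delta>"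
    and r: "T w = Some (A, xs, f)" and nb: "normal_body xs ys g f" and height: "subtree_height_lt T w (Suc n)"
    and atom: "(I, zs) \<in> iatoms f" and j: "j < length zs"
  shows "inst_store w xs ys args (zs ! j) \<in> comp_vars (chi_aux T (Suc n) w args) (comp_of P (PI I ! j))"
proof -
  have "(A, xs, f) \<in> \<Delta>"
    using rtree r unfolding is_rtree_def by blast
  then have "tight_form P PI prof f"
    using tight unfolding tight_sid_for_def by auto
  then have "(\<exists>C q. (C, q, zs ! j) \<in> catoms f \<and> PI I ! j \<in> P C) \<or>
      (\<exists>B zs' l. (B, zs') \<in> set (preds f) \<and> l < length zs' \<and> zs' ! l = zs ! j \<and> PI I ! j \<in> P (prof B ! l))"
    using atom j unfolding tight_form_def by (auto dest!: bspec[OF _ atom])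
  then show ?thesis
  proof (elim disjE exE conjE)
    fix C q
    assume "(C, q, zs ! j) \<in> catoms f" "PI I ! j \<in> P C"
    then show ?thesis
      using normal_body.body[OF nb] comp_of_eq[OF sig] unfolding chi_aux_Suc_atoms(2)[OF r nb]
      by (auto simp: comp_vars_def)
  next
    fix B zs' l
    assume "(B, zs') \<in> set (preds f)" "l < length zs'" and "zs' ! l = zs ! j" "PI I ! j \<in> P (prof B ! l)"
    then show ?thesis
      using chi_aux_Suc_pred_arg_covered[OF tight r nb height] comp_of_eq[OF sig] by metis
  qed
qed

lemma chi_aux_ports_covered:
  assumes sig: "wf_sig P PI Q" and tight: "tight_sid_for P PI ar prof \<Delta>"
    and "w \<in> dom T" "subtree_height_lt T w n"
  shows "\<forall>(I, zs) \<in> iatoms (chi_aux T n w args). length zs = length (PI I) \<and>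
    (\<forall>j < length zs. zs ! j \<in> comp_vars (chi_aux T n w args) (comp_of P (PI I ! j)))"
  using assms(3-)
proof (induction n arbitrary: w args)
  case 0
  then show ?case
    using subtree_height_lt_0 by blast
next
  case (Suc n)
  obtain A xs f ys g where r: "T w = Some (A, xs, f)" and nb: "normal_body xs ys g f"
    by (rule node_normal_body[OF Suc.prems(1)])
  let ?\<sigma> = "inst_store w xs ys args" and ?F = "chi_aux T (Suc n) w args"
  have "length zs = length (PI I)" if "(I, zs) \<in> iatoms f" for I zs
    using sid that rtree r unfolding wf_sid_def is_rtree_def by fastforce
  then have own: "length zs = length (PI I) \<and> (\<forall>j < length zs. ?\<sigma> (zs ! j) \<in> comp_vars ?F (comp_of P (PI I ! j)))"
    if "(I, zs) \<in> iatoms f" for I zs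
    using chi_aux_Suc_own_ports[OF sig tight r nb Suc.prems(2) that] that by blast
  have child: "\<forall>(I, zs) \<in> iatoms (chi_aux T n (w @ [Suc i]) (map ?\<sigma> (snd (preds g ! i)))).
      length zs = length (PI I) \<and> (\<forall>j < length zs. zs ! j \<in> comp_vars ?F (comp_of P (PI I ! j)))"
    if "i < npred g" for i
    using Suc.IH[OF child_node(1)[OF r nb that] subtree_height_lt_child[OF Suc.prems(2)]] that
    unfolding chi_aux_Suc_atoms(2)[OF r nb] by fastforce
  show ?case
    using own child normal_body.body[OF nb] unfolding chi_aux_Suc_atoms(3)[OF r nb] by fastforce
qed

lemma chi_closed_root:
  assumes "T [] = Some (A, [], \<phi>)"
  shows "chi T = chi_aux T (card (dom T)) [] []"
  using assms by (simp add: chi_def)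

lemma chi_shape:
  assumes "T [] = Some (A, [], \<phi>)"
  shows "preds (chi T) = []" "stateful (chi T)" "binders_apart (chi T)"
  using chi_aux_pred_free[of "[]" "card (dom T)" "[]"] chi_aux_binders_apart[of "[]" "card (dom T)" "[]"]
    subtree_height_lt_card assms
  unfolding chi_closed_root[OF assms] by auto

lemma chi_canonical_store:
  assumes "T [] = Some (A, [], \<phi>)"
  shows "inj_on (sT T) (comp_vars (chi T) C)" "sT T ` comp_vars (chi T) C \<subseteq> dom T"
proof -
  have "[] \<in> dom T" "canonical_args T [] []"
    using assms by (auto simp: canonical_args_def)
  then have "(\<forall>(C, q, x) \<in> catoms (chi T). sT T x \<in> dom T \<and> (\<exists>v. sT T x = [] @ v)) \<and>
      inj_on (\<lambda>(C, q, x). sT T x) (catoms (chi T))"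
    unfolding chi_closed_root[OF assms]
    using chi_aux_comp_positions chi_aux_comp_inj subtree_height_lt_card by blast
  then show "inj_on (sT T) (comp_vars (chi T) C)" "sT T ` comp_vars (chi T) C \<subseteq> dom T"
    unfolding comp_vars_def inj_on_def by fastforce+
qed

lemma chi_ports:
  assumes "wf_sig P PI Q" "tight_sid_for P PI ar prof \<Delta>" "T [] = Some (A, [], \<phi>)"
  shows "\<forall>(I, xs) \<in> iatoms (chi T). length xs = length (PI I) \<and>
    (\<forall>j < length xs. xs ! j \<in> comp_vars (chi T) (comp_of P (PI I ! j)))"
  using chi_aux_ports_covered[OF assms(1,2), of "[]" "card (dom T)" "[]"] subtree_height_lt_card assms(3)
  unfolding chi_closed_root[OF assms(3)] by blast

end

lemma canon_eq_atoms_cfg: "canon T = atoms_cfg (sT T) (chi T)"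
  unfolding canon_def atoms_cfg_def comp_vars_def by (auto simp: fun_eq_iff image_def)

theorem mainTheorem8:
  fixes P :: "'c::finite \<Rightarrow> 'p set" and PI :: "'i \<Rightarrow> 'p list" and Q :: "'c \<Rightarrow> 'q set"
    and \<Delta> :: "('c,'q,'i,'a,'v) rule set" and ar :: "'a \<Rightarrow> nat" and \<kappa> :: nat
    and A\<phi> :: 'a and \<phi> :: "('c,'q,'i,'a,'v) form"
    and T :: "('c,'q,'i,'a,'v) rtree"
    and s :: "nat list \<times> 'v \<Rightarrow> nat list" and c :: "('c,'i,'q,nat list) cfg"
  assumes "wf_sig P PI Q"
    and "wf_sid PI ar \<kappa> \<Delta>"
    and "\<forall>r \<in> \<Delta>. rule_I r \<or> rule_II r"
    and "\<exists>prof. tight_sid_for P PI ar prof \<Delta> \<and> tight_form P PI prof \<phi>"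
    and "fv \<phi> = {}"
    and "(A\<phi>, [], \<phi>) \<in> \<Delta>"
    and "is_rtree \<Delta> \<kappa> (A\<phi>, [], \<phi>) T"
    and "\<forall>v. s v \<in> Univ \<kappa>"
    and "is_config PI Q (Univ \<kappa>) c"
    and "sat (lift_sid \<Delta>) Q (Univ \<kappa>) s (chi T) c"
  shows "sym_cfg P PI Q (Univ \<kappa>) c (canon T)"
proof -
  \<comment> \<open>the root rule lies in \<open>\<Delta>\<close> because \<open>T\<close> is a rewriting tree, which makes \<open>\<phi>\<close> closed and tight\<close>
  interpret rewriting_tree PI ar \<kappa> \<Delta> "(A\<phi>, [], \<phi>)" T
    using assms(2,3,7) by unfold_locales
  obtain prof where tight: "tight_sid_for P PI ar prof \<Delta>"
    using assms(4) by blast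
  have root: "T [] = Some (A\<phi>, [], \<phi>)" and dom_univ: "dom T \<subseteq> Univ \<kappa>"
    using assms(7) unfolding is_rtree_def by blast+
  obtain s' where s': "\<forall>x. s' x \<in> Univ \<kappa>" "c = atoms_cfg s' (chi T)"
      "\<forall>C. inj_on s' (comp_vars (chi T) C)" "\<forall>(C, q, x) \<in> catoms (chi T). q \<in> Q C"
    using sat_imp_atoms_cfg[OF assms(10) chi_shape[OF root] assms(8)] by blast
  have "sT T ` comp_vars (chi T) C \<subseteq> Univ \<kappa>" for C
    using chi_canonical_store(2)[OF root] dom_univ by blast
  then have "sym_cfg P PI Q (Univ \<kappa>) (atoms_cfg s' (chi T)) (atoms_cfg (sT T) (chi T))"
    using s' chi_canonical_store(1)[OF root]
    by (intro sym_cfg_atoms_cfg[OF assms(1) _ chi_ports[OF assms(1) tight root]]) auto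
  then show ?thesis
    unfolding s'(2) canon_eq_atoms_cfg .
qed

end
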